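(* Let $F$ be a field of characteristic $0$, $V$ an $n$-dimensional $F$-vector space, $G\le\mathrm{GL}(V)$ a finite group generated by pseudo-reflections, and $M$ an $r$-dimensional $F[G]$-module with $M^G=0$. For $1\le i,j\le r$ let $L_{ij}\in\mathrm{S}(V)^G$ be the element with $d_i^*\delta_j^*+\delta_j^*d_i^*=\partial_{L_{ij}}$ on $\mathrm{S}(V^* )\otimes\wedge M^*$. Then each $L_{ij}$ is homogeneous of positive degree, and each $d_i^*$ maps $\mathcal{H}(\mathrm{S}(V^* )\otimes\wedge M^* )$ into itself.
   Context: $G$ acts contragrediently on $V^*,M^*$ and diagonally on tensor products of symmetric algebras $\mathrm{S}(\cdot)$ and exterior algebras $\wedge(\cdot)$. $(\mathrm{S}(V)\otimes M^* )^G$ and $(\mathrm{S}(V)\otimes M)^G$ are free $\mathrm{S}(V)^G$-modules with homogeneous bases $\tilde\omega_1^{M^*},\dots,\tilde\omega_r^{M^*}$ and $\tilde\omega_1^{M},\dots,\tilde\omega_r^{M}$ respectively. For $s\in\mathrm{S}(V)$, $\partial_s$ is the constant-coefficient differential operator on $\mathrm{S}(V^* )$ ($\partial_v$ the derivation with $\partial_v\lambda=\lambda(v)$, extended multiplicatively; $s\mapsto\partial_s$ is injective), acting as $\partial_s\otimes\mathrm{id}$. $\epsilon_\mu$ is left exterior multiplication by $\mu\in M^*$ and $\iota_m$ ($m\in M$) is the anti-derivation of $\wedge M^*$ with $\iota_m(\xi)=\xi(m)$. If $\tilde\omega_i^{M^*}=\sum_k s_k\otimes\mu_k$ then $d_i^*=\sum_k\partial_{s_k}\otimes\epsilon_{\mu_k}$;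 if $\tilde\omega_j^M=\sum_kt_k\otimes m_k$ then $\delta_j^*=\sum_k\partial_{t_k}\otimes\iota_{m_k}$. $\mathcal{J}_M\subset\mathrm{S}(V)\otimes\wedge M$ is the ideal generated by homogeneous $G$-invariants of positive degree. The pairing $\mathrm{S}(V^* )\otimes\wedge M^*\times\mathrm{S}(V)\otimes\wedge M\to F$ is $\langle f\otimes\nu,s\otimes\ell\rangle=\langle f,s\rangle\langle\nu,\ell\rangle$ with $\langle\lambda_1\cdots\lambda_k,v_1\cdots v_l\rangle=\delta_{kl}\sum_{\sigma\in\mathfrak{S}_k}\prod_i\lambda_i(v_{\sigma(i)})$ and $\langle\xi_1\wedge\cdots\wedge\xi_k,m_1\wedge\cdots\wedge m_l\rangle=\delta_{kl}\det(\xi_i(m_j))$; $\mathcal{H}(\mathrm{S}(V^* )\otimes\wedge M^* )=\{\omega:\langle\omega,\xi\rangle=0\ \forall\xi\in\mathcal{J}_M\}$. *)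

theory Defs
  imports "HOL-Analysis.Analysis" "HOL-Library.Poly_Mapping"
begin

text \<open>V = F^'n with standard basis e_k (k :: 'n); S(V) and S(V*) are both modelled as
 polynomials in variables indexed by 'n (variable k = e_k, resp. the dual coordinate x_k).
 M = F^'m with basis e_a (a :: 'm), M* with dual basis.\<close>

type_synonym ('a, 'n) sqmat = "(('a, 'n) vec, 'n) vec"

type_synonym ('a, 'v) mpoly = "('v \<Rightarrow>\<^sub>0 nat) \<Rightarrow>\<^sub>0 'a"

definition pconst :: "'a::zero \<Rightarrow> ('a, 'v) mpoly" where
  "pconst c = Poly_Mapping.single 0 c"

definition pvar :: "'v \<Rightarrow> ('a::zero_neq_one, 'v) mpoly" where
  "pvar k = Poly_Mapping.single (Poly_Mapping.single k 1) 1"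

definition mdeg :: "('v::finite \<Rightarrow>\<^sub>0 nat) \<Rightarrow> nat" where
  "mdeg \<alpha> = (\<Sum>k\<in>UNIV. Poly_Mapping.lookup \<alpha> k)"

definition homog_poly :: "nat \<Rightarrow> ('a::zero, 'v::finite) mpoly \<Rightarrow> bool" where
  "homog_poly d p \<longleftrightarrow> (\<forall>\<alpha>\<in>Poly_Mapping.keys p. mdeg \<alpha> = d)"

definition psubst :: "('v \<Rightarrow> ('a::comm_ring_1, 'w) mpoly) \<Rightarrow> ('a, 'v::finite) mpoly \<Rightarrow> ('a, 'w) mpoly" where
  "psubst \<sigma> p = (\<Sum>\<alpha>\<in>Poly_Mapping.keys p. pconst (Poly_Mapping.lookup p \<alpha>) * (\<Prod>k\<in>UNIV. \<sigma> k ^ Poly_Mapping.lookup \<alpha> k))"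

definition act_SV :: "'a::comm_ring_1^'n^'n \<Rightarrow> ('a, 'n::finite) mpoly \<Rightarrow> ('a, 'n) mpoly" where
  "act_SV g = psubst (\<lambda>k. \<Sum>l\<in>UNIV. pconst (g $ l $ k) * pvar l)"

definition SV_inv :: "('a::comm_ring_1^'n^'n) set \<Rightarrow> ('a, 'n::finite) mpoly set" where
  "SV_inv G = {p. \<forall>g\<in>G. act_SV g p = p}"

text \<open>S(V) \<otimes> M*: coefficient function w.r.t. the dual basis of M*; contragredient action\<close>
definition act_SVMs :: "'a::field^'n^'n \<Rightarrow> ('a^'n^'n \<Rightarrow> 'a^'m^'m)
    \<Rightarrow> ('m::finite \<Rightarrow> ('a, 'n::finite) mpoly) \<Rightarrow> ('m \<Rightarrow> ('a, 'n) mpoly)" where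
  "act_SVMs g \<rho> w = (\<lambda>b. \<Sum>a\<in>UNIV. pconst (matrix_inv (\<rho> g) $ a $ b) * act_SV g (w a))"

text \<open>S(V) \<otimes> M: coefficient function w.r.t. the basis of M\<close>
definition act_SVM :: "'a::field^'n^'n \<Rightarrow> ('a^'n^'n \<Rightarrow> 'a^'m^'m)
    \<Rightarrow> ('m::finite \<Rightarrow> ('a, 'n::finite) mpoly) \<Rightarrow> ('m \<Rightarrow> ('a, 'n) mpoly)" where
  "act_SVM g \<rho> w = (\<lambda>b. \<Sum>a\<in>UNIV. pconst (\<rho> g $ b $ a) * act_SV g (w a))"

definition SVMs_inv where
  "SVMs_inv G \<rho> = {w. \<forall>g\<in>G. act_SVMs g \<rho> w = w}"

definition SVM_inv where
  "SVM_inv G \<rho> = {w. \<forall>g\<in>G. act_SVM g \<rho> w = w}"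

section \<open>Exterior algebras (coefficients w.r.t. the basis e_A, A a set of indices, ordered increasingly)\<close>

definition shuffle_sign :: "'m::linorder set \<Rightarrow> 'm set \<Rightarrow> 'b::ring_1" where
  "shuffle_sign A B = (-1) ^ card {(a, b). a \<in> A \<and> b \<in> B \<and> b < a}"

definition wedge :: "('m::{finite,linorder} set \<Rightarrow> 'b::comm_ring_1) \<Rightarrow> ('m set \<Rightarrow> 'b) \<Rightarrow> ('m set \<Rightarrow> 'b)" where
  "wedge u w = (\<lambda>C. \<Sum>A\<in>Pow C. shuffle_sign A (C - A) * u A * w (C - A))"

definition ext_one :: "'m set \<Rightarrow> 'b::{zero,one}" where
  "ext_one = (\<lambda>C. if C = {} then 1 else 0)"

definition ext_vec :: "('m \<Rightarrow> 'b::zero) \<Rightarrow> 'm set \<Rightarrow> 'b" where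
  "ext_vec v = (\<lambda>C. if card C = 1 then v (the_elem C) else 0)"

text \<open>induced action of a matrix R on \<wedge>M: e_A \<mapsto> R e_{a1} \<and> ... \<and> R e_{ak}\<close>
definition ext_act :: "('a::comm_ring_1, 'm::{finite,linorder}) sqmat \<Rightarrow> 'm set \<Rightarrow> 'm set \<Rightarrow> 'a" where
  "ext_act R A = foldr (\<lambda>a acc. wedge (ext_vec (\<lambda>b. R $ b $ a)) acc) (sorted_list_of_set A) ext_one"

text \<open>S(V) \<otimes> \<wedge>M with diagonal action\<close>
definition act_SVLM :: "'a::field^'n^'n \<Rightarrow> ('a^'n^'n \<Rightarrow> ('a, 'm::{finite,linorder}) sqmat)
    \<Rightarrow> ('m set \<Rightarrow> ('a, 'n::finite) mpoly) \<Rightarrow> ('m set \<Rightarrow> ('a, 'n) mpoly)" where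
  "act_SVLM g \<rho> \<omega> = (\<lambda>C. \<Sum>A\<in>UNIV. pconst (ext_act (\<rho> g) A C) * act_SV g (\<omega> A))"

definition homog_form :: "nat \<Rightarrow> ('m set \<Rightarrow> ('a::zero, 'n::finite) mpoly) \<Rightarrow> bool" where
  "homog_form d \<omega> \<longleftrightarrow> (\<forall>A. \<forall>\<alpha>\<in>Poly_Mapping.keys (\<omega> A). mdeg \<alpha> + card A = d)"

text \<open>The ideal J_M of S(V) \<otimes> \<wedge>M generated by homogeneous G-invariants of positive degree\<close>
inductive_set JM :: "('a::field^'n^'n) set \<Rightarrow> ('a^'n^'n \<Rightarrow> ('a, 'm::{finite,linorder}) sqmat)
    \<Rightarrow> ('m set \<Rightarrow> ('a, 'n::finite) mpoly) set"
  for G \<rho> where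
  JM_zero: "(\<lambda>_. 0) \<in> JM G \<rho>"
| JM_add: "\<lbrakk>\<forall>g\<in>G. act_SVLM g \<rho> h = h; homog_form d h; d > 0; \<xi> \<in> JM G \<rho>\<rbrakk>
           \<Longrightarrow> (\<lambda>C. wedge c h C + \<xi> C) \<in> JM G \<rho>"

text \<open>partial derivative \<partial>_{e_k} = d/dx_k\<close>
definition pd :: "'n \<Rightarrow> ('a::comm_ring_1, 'n) mpoly \<Rightarrow> ('a, 'n) mpoly" where
  "pd k p = (\<Sum>\<alpha>\<in>Poly_Mapping.keys p. Poly_Mapping.single (\<alpha> - Poly_Mapping.single k 1)
                          (of_nat (Poly_Mapping.lookup \<alpha> k) * Poly_Mapping.lookup p \<alpha>))"

definition dmono :: "('n::{finite,linorder} \<Rightarrow>\<^sub>0 nat) \<Rightarrow> ('a::comm_ring_1, 'n) mpoly \<Rightarrow> ('a, 'n) mpoly" where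
  "dmono \<beta> = foldr (\<lambda>k f. (pd k ^^ Poly_Mapping.lookup \<beta> k) \<circ> f) (sorted_list_of_set UNIV) id"

definition dop :: "('a::comm_ring_1, 'n::{finite,linorder}) mpoly \<Rightarrow> ('a, 'n) mpoly \<Rightarrow> ('a, 'n) mpoly" where
  "dop s p = (\<Sum>\<beta>\<in>Poly_Mapping.keys s. pconst (Poly_Mapping.lookup s \<beta>) * dmono \<beta> p)"

definition Dform :: "('a::comm_ring_1, 'n::{finite,linorder}) mpoly \<Rightarrow> ('m set \<Rightarrow> ('a, 'n) mpoly) \<Rightarrow> ('m set \<Rightarrow> ('a, 'n) mpoly)" where
  "Dform s \<omega> = (\<lambda>A. dop s (\<omega> A))"

text \<open>left exterior multiplication by the dual basis vector e*_a\<close>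
definition eps :: "'m::linorder \<Rightarrow> ('m set \<Rightarrow> 'b::ring_1) \<Rightarrow> ('m set \<Rightarrow> 'b)" where
  "eps a \<omega> = (\<lambda>B. if a \<in> B then (-1) ^ card {c\<in>B. c < a} * \<omega> (B - {a}) else 0)"

text \<open>contraction (anti-derivation) \<iota>_{e_a}\<close>
definition iota :: "'m::linorder \<Rightarrow> ('m set \<Rightarrow> 'b::ring_1) \<Rightarrow> ('m set \<Rightarrow> 'b)" where
  "iota a \<omega> = (\<lambda>B. if a \<notin> B then (-1) ^ card {c\<in>B. c < a} * \<omega> (insert a B) else 0)"

text \<open>d*_i for \<omega>~_i = \<Sum>_a s_a \<otimes> e*_a\<close>
definition dstar :: "('m::{finite,linorder} \<Rightarrow> ('a::comm_ring_1, 'n::{finite,linorder}) mpoly)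
    \<Rightarrow> ('m set \<Rightarrow> ('a, 'n) mpoly) \<Rightarrow> ('m set \<Rightarrow> ('a, 'n) mpoly)" where
  "dstar w \<omega> = (\<lambda>B. \<Sum>a\<in>UNIV. eps a (Dform (w a) \<omega>) B)"

text \<open>\<delta>*_j for \<omega>~_j = \<Sum>_a t_a \<otimes> e_a\<close>
definition deltastar :: "('m::{finite,linorder} \<Rightarrow> ('a::comm_ring_1, 'n::{finite,linorder}) mpoly)
    \<Rightarrow> ('m set \<Rightarrow> ('a, 'n) mpoly) \<Rightarrow> ('m set \<Rightarrow> ('a, 'n) mpoly)" where
  "deltastar w \<omega> = (\<lambda>B. \<Sum>a\<in>UNIV. iota a (Dform (w a) \<omega>) B)"

definition mono_list :: "('n::{finite,linorder} \<Rightarrow>\<^sub>0 nat) \<Rightarrow> 'n list" where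
  "mono_list \<alpha> = concat (map (\<lambda>k. replicate (Poly_Mapping.lookup \<alpha> k) k) (sorted_list_of_set UNIV))"

text \<open>\<langle>x^\<alpha>, y^\<beta>\<rangle> = \<Sum>_\<sigma> \<Prod>_i x_{k_i}(e_{l_\<sigma>(i)})\<close>
definition sym_pair :: "('n::{finite,linorder} \<Rightarrow>\<^sub>0 nat) \<Rightarrow> ('n \<Rightarrow>\<^sub>0 nat) \<Rightarrow> 'a::comm_ring_1" where
  "sym_pair \<alpha> \<beta> = (let xs = mono_list \<alpha>; ys = mono_list \<beta> in
     if length xs = length ys then
       (\<Sum>\<sigma>\<in>{\<sigma>. \<sigma> permutes {..<length xs}}. \<Prod>i<length xs. of_bool (xs ! i = ys ! (\<sigma> i)))
     else 0)"

text \<open>\<langle>e*_A, e_B\<rangle> = det(e*_{a_i}(e_{b_j}))\<close>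
definition ext_pair :: "'m::{finite,linorder} set \<Rightarrow> 'm set \<Rightarrow> 'a::comm_ring_1" where
  "ext_pair A B = (let as = sorted_list_of_set A; bs = sorted_list_of_set B in
     if length as = length bs then
       (\<Sum>\<sigma>\<in>{\<sigma>. \<sigma> permutes {..<length as}}. of_int (sign \<sigma>) * (\<Prod>i<length as. of_bool (as ! i = bs ! (\<sigma> i))))
     else 0)"

definition pairing :: "('m::{finite,linorder} set \<Rightarrow> ('a::comm_ring_1, 'n::{finite,linorder}) mpoly)
    \<Rightarrow> ('m set \<Rightarrow> ('a, 'n) mpoly) \<Rightarrow> 'a" where
  "pairing \<omega> \<xi> = (\<Sum>A\<in>UNIV. \<Sum>B\<in>UNIV. ext_pair A B *
      (\<Sum>\<alpha>\<in>Poly_Mapping.keys (\<omega> A). \<Sum>\<beta>\<in>Poly_Mapping.keys (\<xi> B). Poly_Mapping.lookup (\<omega> A) \<alpha> * Poly_Mapping.lookup (\<xi> B) \<beta> * sym_pair \<alpha> \<beta>))"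

definition harmonics where
  "harmonics G \<rho> = {\<omega>. \<forall>\<xi>\<in>JM G \<rho>. pairing \<omega> \<xi> = 0}"

definition pseudo_reflection :: "'a::field^'n^'n \<Rightarrow> bool" where
  "pseudo_reflection g \<longleftrightarrow> invertible g \<and> g \<noteq> mat 1 \<and>
     (\<exists>\<phi>::'a^'n. \<phi> \<noteq> 0 \<and> (\<forall>v. (\<Sum>k\<in>UNIV. \<phi> $ k * v $ k) = 0 \<longrightarrow> g *v v = v))"

inductive_set gen_group :: "('a::field^'n^'n) set \<Rightarrow> ('a^'n^'n) set" for R where
  "mat 1 \<in> gen_group R"
| "r \<in> R \<Longrightarrow> r \<in> gen_group R"
| "r \<in> R \<Longrightarrow> matrix_inv r \<in> gen_group R"
| "x \<in> gen_group R \<Longrightarrow> y \<in> gen_group R \<Longrightarrow> x ** y \<in> gen_group R"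

definition finite_matrix_group :: "('a::field^'n^'n) set \<Rightarrow> bool" where
  "finite_matrix_group G \<longleftrightarrow> finite G \<and> (\<forall>g\<in>G. invertible g) \<and> mat 1 \<in> G
     \<and> (\<forall>g\<in>G. \<forall>h\<in>G. g ** h \<in> G) \<and> (\<forall>g\<in>G. matrix_inv g \<in> G)"

definition matrix_rep :: "('a::field^'n^'n) set \<Rightarrow> ('a^'n^'n \<Rightarrow> 'a^'m^'m) \<Rightarrow> bool" where
  "matrix_rep G \<rho> \<longleftrightarrow> \<rho> (mat 1) = mat 1 \<and> (\<forall>g\<in>G. \<forall>h\<in>G. \<rho> (g ** h) = \<rho> g ** \<rho> h)"

definition homog_free_basis :: "('a::field^'n^'n) set \<Rightarrow> ('m::finite \<Rightarrow> ('a, 'n::finite) mpoly) set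
     \<Rightarrow> ('i::finite \<Rightarrow> 'm \<Rightarrow> ('a, 'n) mpoly) \<Rightarrow> bool" where
  "homog_free_basis G Inv w \<longleftrightarrow> (\<forall>i. w i \<in> Inv) \<and> (\<forall>i. \<exists>d. \<forall>a. homog_poly d (w i a))
     \<and> (\<forall>x\<in>Inv. \<exists>!f. (\<forall>i. f i \<in> SV_inv G) \<and> x = (\<lambda>a. \<Sum>i\<in>UNIV. f i * w i a))"

end

theory Submission
  imports Defs
begin

text \<open>Let \<open>\<Sum>\<^sub>b s\<^sub>b \<otimes> e*\<^sub>b\<close> and \<open>\<Sum>\<^sub>b t\<^sub>b \<otimes> e\<^sub>b\<close> be the basis elements defining \<open>d\<^sub>i*\<close> and \<open>\<delta>\<^sub>j*\<close>.
  On forms of exterior degree 0 the operator \<open>\<delta>\<^sub>j*\<close> vanishes, so the anticommutation relation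
  gives \<open>\<partial>\<^bsub>L\<^sub>i\<^sub>j\<^esub> = \<Sum>\<^sub>b \<partial>\<^bsub>t\<^sub>b\<^esub> \<partial>\<^bsub>s\<^sub>b\<^esub>\<close>; since \<open>s \<mapsto> \<partial>\<^sub>s\<close> is an injective ring
  homomorphism, \<open>L\<^sub>i\<^sub>j = \<Sum>\<^sub>b t\<^sub>b s\<^sub>b\<close>, homogeneous of degree \<open>deg t + deg s\<close>. Both degrees are
  positive: a basis element of degree 0 would be a nonzero fixed vector of \<open>M\<close> or of \<open>M*\<close>, and
  \<open>M\<^sup>G = 0\<close> implies \<open>(M*)\<^sup>G = 0\<close> by averaging in characteristic 0.

  Under the pairing, \<open>d\<^sub>i*\<close> is adjoint to \<open>\<xi> \<mapsto> \<Sum>\<^sub>b s\<^sub>b \<iota>\<^sub>b \<xi>\<close>. As contraction is an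
  antiderivation, this operator obeys a Leibniz rule for \<open>\<and>\<close>; it commutes with \<open>G\<close> and changes
  degrees by \<open>deg s - 1 \<ge> 0\<close>, so it maps \<open>J\<^sub>M\<close> into itself and \<open>d\<^sub>i*\<close> preserves the annihilator
  of \<open>J\<^sub>M\<close>. Generation by pseudo-reflections only serves to make the modules of covariants free,
  which is assumed here.\<close>

abbreviation lookup where "lookup \<equiv> Poly_Mapping.lookup"
abbreviation keys where "keys \<equiv> Poly_Mapping.keys"
abbreviation single where "single \<equiv> Poly_Mapping.single"

lemma lookup_pconst: "lookup (pconst c) \<alpha> = (if \<alpha> = 0 then c else 0)"
  by (simp add: pconst_def lookup_single when_def)

lemma pconst_0 [simp]: "pconst 0 = 0"
  by (simp add: pconst_def)

lemma pconst_1: "pconst 1 = 1"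
  by (simp add: pconst_def)

lemma pconst_add: "pconst (a + b) = pconst a + pconst b"
  by (simp add: pconst_def single_add)

lemma pconst_mult: "pconst ((a::'a::comm_ring_1) * b) = pconst a * pconst b"
  by (simp add: pconst_def mult_single)

lemma pconst_sum: "pconst (sum f S) = (\<Sum>x\<in>S. pconst (f x))"
  by (induct S rule: infinite_finite_induct) (auto simp: pconst_add)

lemma pconst_neg_one_power: "pconst ((-1::'a::comm_ring_1) ^ n) = (-1) ^ n"
  by (induct n) (simp_all add: pconst_1 pconst_mult pconst_def single_uminus)

lemma pconst_inject: "pconst a = pconst b \<longleftrightarrow> a = b"
  by (metis lookup_pconst)

lemma lookup_pconst_mult: "lookup (pconst (c::'a::comm_ring_1) * p) \<alpha> = c * lookup p \<alpha>"
proof -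
  have "pconst c * p = Poly_Mapping.map ((*) c) p"
    by (simp add: mult_map_scale_conv_mult pconst_def)
  then show ?thesis
    by (simp add: Poly_Mapping.map.rep_eq when_def)
qed

lemma poly_mapping_eq_sum_single: "p = (\<Sum>\<alpha>\<in>keys p. single \<alpha> (lookup p \<alpha>))"
  by (rule poly_mapping_eqI) (auto simp: lookup_sum lookup_single when_def in_keys_iff)

lemma poly_mapping_mult_eq_sum:
  "p * q = (\<Sum>\<alpha>\<in>keys p. \<Sum>\<beta>\<in>keys q. single (\<alpha> + \<beta>) (lookup p \<alpha> * lookup q \<beta>))"
  by (subst (1) poly_mapping_eq_sum_single[of p], subst (1) poly_mapping_eq_sum_single[of q])
    (simp add: sum_product mult_single)

lemma mdeg_add: "mdeg (\<alpha> + \<beta>) = mdeg \<alpha> + mdeg \<beta>"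
  by (simp add: mdeg_def lookup_add sum.distrib)

lemma mdeg_eq_0_iff: "mdeg (\<alpha>::'n::finite \<Rightarrow>\<^sub>0 nat) = 0 \<longleftrightarrow> \<alpha> = 0"
  by (auto simp: mdeg_def poly_mapping_eq_iff fun_eq_iff)

lemma homog_poly_0_eq_pconst:
  fixes p :: "('a::zero, 'n::finite) mpoly"
  assumes "homog_poly 0 p"
  shows "p = pconst (lookup p 0)"
proof (rule poly_mapping_eqI)
  fix \<alpha>
  have "\<alpha> \<noteq> 0 \<Longrightarrow> \<alpha> \<notin> keys p"
    using assms mdeg_eq_0_iff[of \<alpha>] by (auto simp: homog_poly_def)
  then show "lookup p \<alpha> = lookup (pconst (lookup p 0)) \<alpha>"
    by (auto simp: lookup_pconst in_keys_iff)
qed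

lemma homog_poly_mult:
  assumes "homog_poly d p" "homog_poly e q"
  shows "homog_poly (d + e) (p * q)"
  unfolding homog_poly_def
proof
  fix \<gamma> assume "\<gamma> \<in> keys (p * q)"
  then obtain \<alpha> \<beta> where "\<gamma> = \<alpha> + \<beta>" "\<alpha> \<in> keys p" "\<beta> \<in> keys q"
    using keys_mult by blast
  then show "mdeg \<gamma> = d + e"
    using assms by (simp add: homog_poly_def mdeg_add)
qed

lemma homog_poly_sum:
  assumes "\<And>i. i \<in> I \<Longrightarrow> homog_poly d (p i)"
  shows "homog_poly d (\<Sum>i\<in>I. p i)"
  using assms keys_sum by (fastforce simp: homog_poly_def)

definition monom_subst :: "('v \<Rightarrow> ('a::comm_ring_1, 'w) mpoly) \<Rightarrow> ('v::finite \<Rightarrow>\<^sub>0 nat) \<Rightarrow> ('a, 'w) mpoly" where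
  "monom_subst \<sigma> \<alpha> = (\<Prod>k\<in>UNIV. \<sigma> k ^ lookup \<alpha> k)"

lemma monom_subst_add: "monom_subst \<sigma> (\<alpha> + \<beta>) = monom_subst \<sigma> \<alpha> * monom_subst \<sigma> \<beta>"
  by (simp add: monom_subst_def lookup_add power_add prod.distrib)

lemma psubst_eq_sum:
  assumes "finite S" "keys p \<subseteq> S"
  shows "psubst \<sigma> p = (\<Sum>\<alpha>\<in>S. pconst (lookup p \<alpha>) * monom_subst \<sigma> \<alpha>)"
  unfolding psubst_def monom_subst_def using assms
  by (intro sum.mono_neutral_left) (auto simp: in_keys_iff)

lemma psubst_add: "psubst \<sigma> (p + q) = psubst \<sigma> p + psubst \<sigma> q"
proof -
  let ?S = "keys p \<union> keys q \<union> keys (p + q)"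
  have "psubst \<sigma> (p + q) = (\<Sum>\<alpha>\<in>?S. pconst (lookup (p + q) \<alpha>) * monom_subst \<sigma> \<alpha>)"
    by (rule psubst_eq_sum) auto
  also have "\<dots> = psubst \<sigma> p + psubst \<sigma> q"
    by (subst (1 2) psubst_eq_sum[of ?S])
      (auto simp: lookup_add pconst_add distrib_right sum.distrib)
  finally show ?thesis .
qed

lemma psubst_0 [simp]: "psubst \<sigma> 0 = 0"
  by (simp add: psubst_def)

lemma psubst_sum: "psubst \<sigma> (sum f S) = (\<Sum>x\<in>S. psubst \<sigma> (f x))"
  by (induct S rule: infinite_finite_induct) (auto simp: psubst_add)

lemma psubst_uminus: "psubst \<sigma> (- p) = - psubst \<sigma> p"
  using psubst_add[of \<sigma> p "- p"] by (simp add: add_eq_0_iff)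

lemma psubst_single: "psubst \<sigma> (single \<alpha> c) = pconst c * monom_subst \<sigma> \<alpha>"
  by (subst psubst_eq_sum[of "{\<alpha>}"]) (auto simp: lookup_single)

lemma psubst_pconst: "psubst \<sigma> (pconst c) = pconst c"
  by (simp add: pconst_def psubst_single[unfolded pconst_def] monom_subst_def)

lemma psubst_mult: "psubst \<sigma> (p * q) = psubst \<sigma> p * psubst \<sigma> q"
proof -
  have "psubst \<sigma> (p * q) = (\<Sum>\<alpha>\<in>keys p. \<Sum>\<beta>\<in>keys q.
      pconst (lookup p \<alpha> * lookup q \<beta>) * monom_subst \<sigma> (\<alpha> + \<beta>))"
    by (subst poly_mapping_mult_eq_sum) (simp add: psubst_sum psubst_single)
  also have "\<dots> = (\<Sum>\<alpha>\<in>keys p. \<Sum>\<beta>\<in>keys q.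
      (pconst (lookup p \<alpha>) * monom_subst \<sigma> \<alpha>) * (pconst (lookup q \<beta>) * monom_subst \<sigma> \<beta>))"
    by (simp add: pconst_mult monom_subst_add algebra_simps)
  also have "\<dots> = psubst \<sigma> p * psubst \<sigma> q"
    by (simp add: psubst_def monom_subst_def sum_product)
  finally show ?thesis .
qed

lemma psubst_neg_one_power_mult: "psubst \<sigma> ((-1) ^ n * p) = (-1) ^ n * psubst \<sigma> p"
  by (cases "even n") (simp_all add: psubst_uminus)

lemma act_SV_mult: "act_SV g (p * q) = act_SV g p * act_SV g q"
  by (simp add: act_SV_def psubst_mult)

lemma act_SV_sum: "act_SV g (sum f S) = (\<Sum>x\<in>S. act_SV g (f x))"
  by (simp add: act_SV_def psubst_sum)

lemma act_SV_pconst: "act_SV g (pconst c) = pconst c"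
  by (simp add: act_SV_def psubst_pconst)

lemma act_SV_neg_one_power_mult: "act_SV g ((-1) ^ n * p) = (-1) ^ n * act_SV g p"
  by (simp add: act_SV_def psubst_neg_one_power_mult)

section \<open>Differential operators and the apolar pairing\<close>

lemma lookup_pd: "lookup (pd k p) \<gamma> = of_nat (lookup \<gamma> k + 1) * lookup p (\<gamma> + single k 1)"
proof -
  have shift: "\<alpha> - single k 1 = \<gamma> \<longleftrightarrow> \<alpha> = \<gamma> + single k 1" if "lookup \<alpha> k \<noteq> 0" for \<alpha>
    using that by (auto simp: poly_mapping_eq_iff fun_eq_iff lookup_add lookup_single lookup_minus when_def)
  have "lookup (pd k p) \<gamma> = (\<Sum>\<alpha>\<in>keys p.
      if \<alpha> - single k 1 = \<gamma> then of_nat (lookup \<alpha> k) * lookup p \<alpha> else 0)"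
    by (simp add: pd_def lookup_sum lookup_single when_def)
  also have "\<dots> = (\<Sum>\<alpha>\<in>keys p. if \<alpha> = \<gamma> + single k 1 then of_nat (lookup \<alpha> k) * lookup p \<alpha> else 0)"
  proof (intro sum.cong refl)
    fix \<alpha>
    show "(if \<alpha> - single k 1 = \<gamma> then of_nat (lookup \<alpha> k) * lookup p \<alpha> else 0)
        = (if \<alpha> = \<gamma> + single k 1 then of_nat (lookup \<alpha> k) * lookup p \<alpha> else 0)"
    proof (cases "lookup \<alpha> k = 0")
      case True
      then have "\<alpha> \<noteq> \<gamma> + single k 1"
        by (metis add_eq_0_iff_both_eq_0 lookup_add lookup_single_eq one_neq_zero)
      then show ?thesis
        using True by simp
    next
      case False
      then show ?thesis
        using shift by presburger
    qed
  qed
  also have "\<dots> = of_nat (lookup \<gamma> k + 1) * lookup p (\<gamma> + single k 1)"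
    by (auto simp: lookup_add in_keys_iff)
  finally show ?thesis .
qed

lemma lookup_pd_power:
  "lookup ((pd k ^^ m) p) \<gamma> = pochhammer (of_nat (lookup \<gamma> k + 1)) m * lookup p (\<gamma> + single k m)"
proof (induct m arbitrary: \<gamma>)
  case 0
  then show ?case by simp
next
  case (Suc m)
  have "\<gamma> + single k 1 + single k m = \<gamma> + single k (Suc m)"
    by (simp add: add.assoc flip: single_add)
  then show ?case
    by (simp add: lookup_pd Suc lookup_add pochhammer_rec add_ac)
qed

lemma lookup_foldr_pd_power:
  assumes "distinct ks"
  shows "lookup (foldr (\<lambda>k f. (pd k ^^ lookup \<beta> k) \<circ> f) ks id p) \<gamma>
       = (\<Prod>k\<in>set ks. pochhammer (of_nat (lookup \<gamma> k + 1)) (lookup \<beta> k))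
         * lookup p (\<gamma> + (\<Sum>k\<in>set ks. single k (lookup \<beta> k)))"
  using assms
proof (induct ks arbitrary: \<gamma>)
  case Nil
  then show ?case by simp
next
  case (Cons k ks)
  let ?\<gamma>' = "\<gamma> + single k (lookup \<beta> k)"
  have unchanged: "(\<Prod>j\<in>set ks. pochhammer (of_nat (lookup ?\<gamma>' j + 1)) (lookup \<beta> j))
      = (\<Prod>j\<in>set ks. pochhammer (of_nat (lookup \<gamma> j + 1)) (lookup \<beta> j))"
    using Cons.prems by (intro prod.cong) (auto simp: lookup_add lookup_single when_def)
  let ?F = "\<lambda>k f. (pd k ^^ lookup \<beta> k) \<circ> f"
  have "distinct ks"
    using Cons.prems by simp
  then have IH: "lookup (foldr ?F ks id p) ?\<gamma>'
      = (\<Prod>j\<in>set ks. pochhammer (of_nat (lookup \<gamma> j + 1)) (lookup \<beta> j))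
        * lookup p (\<gamma> + (single k (lookup \<beta> k) + (\<Sum>j\<in>set ks. single j (lookup \<beta> j))))"
    using Cons.hyps[of ?\<gamma>'] unfolding unchanged by (simp only: add.assoc)
  have "foldr ?F (k # ks) id p = (pd k ^^ lookup \<beta> k) (foldr ?F ks id p)"
    by simp
  then show ?case
    using Cons.prems by (simp only: lookup_pd_power IH) (simp add: mult_ac)
qed

definition multi_fact :: "('n::finite \<Rightarrow>\<^sub>0 nat) \<Rightarrow> nat" where
  "multi_fact \<alpha> = (\<Prod>k\<in>UNIV. fact (lookup \<alpha> k))"

lemma lookup_dmono:
  "lookup (dmono \<beta> p) \<gamma> = (\<Prod>k\<in>UNIV. pochhammer (of_nat (lookup \<gamma> k + 1)) (lookup \<beta> k)) * lookup p (\<gamma> + \<beta>)"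
proof -
  have "(\<Sum>k\<in>UNIV. single k (lookup \<beta> k)) = \<beta>"
    by (rule poly_mapping_eqI) (simp add: lookup_sum lookup_single when_def)
  then show ?thesis
    unfolding dmono_def by (subst lookup_foldr_pd_power) simp_all
qed

lemma multi_fact_mult_pochhammer:
  "of_nat (multi_fact \<gamma>) * (\<Prod>k\<in>UNIV. pochhammer (of_nat (lookup \<gamma> k + 1)) (lookup \<beta> k))
     = (of_nat (multi_fact (\<gamma> + \<beta>)) :: 'a::comm_semiring_1)"
proof -
  have "fact g * pochhammer (g + 1) m = (fact (g + m) :: nat)" for g m
    using pochhammer_product'[of "1::nat" g m] by (simp add: pochhammer_fact add.commute)
  then have factor: "of_nat (fact g) * pochhammer (of_nat (g + 1)) m = (of_nat (fact (g + m)) :: 'a)" for g m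
    by (metis of_nat_mult pochhammer_of_nat)
  have "of_nat (multi_fact \<gamma>) * (\<Prod>k\<in>UNIV. pochhammer (of_nat (lookup \<gamma> k + 1)) (lookup \<beta> k))
      = (\<Prod>k\<in>UNIV. of_nat (fact (lookup \<gamma> k)) * pochhammer (of_nat (lookup \<gamma> k + 1)) (lookup \<beta> k) :: 'a)"
    by (simp add: multi_fact_def of_nat_prod prod.distrib)
  also have "\<dots> = of_nat (multi_fact (\<gamma> + \<beta>))"
    by (simp only: factor multi_fact_def lookup_add of_nat_prod)
  finally show ?thesis .
qed

lemma lookup_dop:
  "lookup (dop s p) \<gamma> = (\<Sum>\<beta>\<in>keys s. lookup s \<beta> * lookup (dmono \<beta> p) \<gamma>)"
  by (simp add: dop_def lookup_sum lookup_pconst_mult)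

lemma dop_0 [simp]: "dop s 0 = 0"
  by (rule poly_mapping_eqI) (simp add: lookup_dop lookup_dmono)

definition apolar :: "('a::comm_ring_1, 'n::finite) mpoly \<Rightarrow> ('a, 'n) mpoly \<Rightarrow> 'a" where
  "apolar f g = (\<Sum>\<alpha>\<in>keys f. lookup f \<alpha> * lookup g \<alpha> * of_nat (multi_fact \<alpha>))"

lemma apolar_eq_sum:
  assumes "finite S" "keys f \<inter> keys g \<subseteq> S"
  shows "apolar f g = (\<Sum>\<alpha>\<in>S. lookup f \<alpha> * lookup g \<alpha> * of_nat (multi_fact \<alpha>))"
proof -
  have "apolar f g = (\<Sum>\<alpha>\<in>keys f \<inter> keys g. lookup f \<alpha> * lookup g \<alpha> * of_nat (multi_fact \<alpha>))"
    unfolding apolar_def by (intro sum.mono_neutral_right) (auto simp: in_keys_iff)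
  also have "\<dots> = (\<Sum>\<alpha>\<in>S. lookup f \<alpha> * lookup g \<alpha> * of_nat (multi_fact \<alpha>))"
    using assms by (intro sum.mono_neutral_left) (auto simp: in_keys_iff)
  finally show ?thesis .
qed

lemma apolar_commute: "apolar f g = apolar g f"
  by (subst (1 2) apolar_eq_sum[of "keys f \<inter> keys g"]) (auto simp: mult_ac)

lemma apolar_add_right: "apolar f (g + h) = apolar f g + apolar f h"
  by (subst (1 2 3) apolar_eq_sum[of "keys f"]) (auto simp: lookup_add algebra_simps sum.distrib)

lemma apolar_add_left: "apolar (f + g) h = apolar f h + apolar g h"
  by (simp add: apolar_commute[of _ h] apolar_add_right)

lemma apolar_0_right [simp]: "apolar f 0 = 0"
  by (simp add: apolar_def)

lemma apolar_0_left [simp]: "apolar 0 g = 0"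
  by (simp add: apolar_def)

lemma apolar_sum_right: "apolar f (sum g S) = (\<Sum>x\<in>S. apolar f (g x))"
  by (induct S rule: infinite_finite_induct) (auto simp: apolar_add_right)

lemma apolar_sum_left: "apolar (sum f S) g = (\<Sum>x\<in>S. apolar (f x) g)"
  by (induct S rule: infinite_finite_induct) (auto simp: apolar_add_left)

lemma apolar_pconst_mult_right: "apolar f (pconst c * g) = c * apolar f g"
  by (simp add: apolar_def lookup_pconst_mult sum_distrib_left mult.assoc mult.left_commute)

lemma apolar_pconst_mult_left: "apolar (pconst c * f) g = c * apolar f g"
  by (simp add: apolar_commute[of _ g] apolar_pconst_mult_right)

lemma apolar_uminus_right: "apolar f (- g) = - apolar f g"
  using apolar_add_right[of f g "- g"] by (simp add: add_eq_0_iff)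

lemma apolar_neg_one_power_mult_right: "apolar f ((-1) ^ n * g) = (-1) ^ n * apolar f g"
  by (cases "even n") (simp_all add: apolar_uminus_right)

lemma apolar_neg_one_power_mult_left: "apolar ((-1) ^ n * f) g = (-1) ^ n * apolar f g"
  by (simp add: apolar_commute[of _ g] apolar_neg_one_power_mult_right)

lemma apolar_single_right: "apolar f (single \<delta> c) = lookup f \<delta> * c * of_nat (multi_fact \<delta>)"
  by (subst apolar_eq_sum[of "{\<delta>}"]) (auto simp: lookup_single)

lemma apolar_dmono: "apolar (dmono \<beta> f) g = apolar f (single \<beta> 1 * g)"
proof -
  have "apolar (dmono \<beta> f) g
      = (\<Sum>\<gamma>\<in>keys g. lookup (dmono \<beta> f) \<gamma> * lookup g \<gamma> * of_nat (multi_fact \<gamma>))"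
    by (rule apolar_eq_sum) auto
  also have "\<dots> = (\<Sum>\<gamma>\<in>keys g. lookup f (\<gamma> + \<beta>) * lookup g \<gamma> * of_nat (multi_fact (\<gamma> + \<beta>)))"
  proof (intro sum.cong refl)
    fix \<gamma>
    have "lookup (dmono \<beta> f) \<gamma> * lookup g \<gamma> * of_nat (multi_fact \<gamma>)
        = (of_nat (multi_fact \<gamma>) * (\<Prod>k\<in>UNIV. pochhammer (of_nat (lookup \<gamma> k + 1)) (lookup \<beta> k)))
          * lookup f (\<gamma> + \<beta>) * lookup g \<gamma>"
      by (simp only: lookup_dmono mult_ac)
    then show "lookup (dmono \<beta> f) \<gamma> * lookup g \<gamma> * of_nat (multi_fact \<gamma>)
        = lookup f (\<gamma> + \<beta>) * lookup g \<gamma> * of_nat (multi_fact (\<gamma> + \<beta>))"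
      by (simp only: multi_fact_mult_pochhammer mult_ac)
  qed
  also have "\<dots> = apolar f (\<Sum>\<gamma>\<in>keys g. single (\<gamma> + \<beta>) (lookup g \<gamma>))"
    by (simp add: apolar_sum_right apolar_single_right mult_ac)
  also have "(\<Sum>\<gamma>\<in>keys g. single (\<gamma> + \<beta>) (lookup g \<gamma>)) = single \<beta> 1 * g"
    by (subst (2) poly_mapping_eq_sum_single[of g]) (simp add: sum_distrib_left mult_single add.commute)
  finally show ?thesis .
qed

lemma apolar_dop: "apolar (dop s f) g = apolar f (s * g)"
proof -
  have "apolar (dop s f) g = apolar f (\<Sum>\<beta>\<in>keys s. pconst (lookup s \<beta>) * (single \<beta> 1 * g))"
    by (simp add: dop_def apolar_sum_left apolar_sum_right apolar_pconst_mult_left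
        apolar_pconst_mult_right apolar_dmono)
  also have "(\<Sum>\<beta>\<in>keys s. pconst (lookup s \<beta>) * (single \<beta> 1 * g)) = s * g"
    by (subst (3) poly_mapping_eq_sum_single[of s])
      (simp add: sum_distrib_right pconst_def mult.assoc[symmetric] mult_single)
  finally show ?thesis .
qed

lemma poly_mapping_eqI_apolar:
  fixes f h :: "('a::{idom,ring_char_0}, 'n::finite) mpoly"
  assumes "\<And>g. apolar f g = apolar h g"
  shows "f = h"
proof (rule poly_mapping_eqI)
  fix \<gamma> :: "'n \<Rightarrow>\<^sub>0 nat"
  have "of_nat (multi_fact \<gamma>) \<noteq> (0::'a)"
    by (simp add: multi_fact_def)
  then show "lookup f \<gamma> = lookup h \<gamma>"
    using assms[of "single \<gamma> 1"] by (simp add: apolar_single_right)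
qed

lemma dop_mult:
  fixes s t :: "('a::{idom,ring_char_0}, 'n::{finite,linorder}) mpoly"
  shows "dop (s * t) p = dop s (dop t p)"
  by (rule poly_mapping_eqI_apolar) (simp add: apolar_dop mult_ac)

lemma dop_sum_symbol:
  fixes s :: "'i \<Rightarrow> ('a::{idom,ring_char_0}, 'n::{finite,linorder}) mpoly"
  shows "dop (\<Sum>i\<in>I. s i) p = (\<Sum>i\<in>I. dop (s i) p)"
  by (rule poly_mapping_eqI_apolar)
    (simp add: apolar_dop apolar_sum_left sum_distrib_right apolar_sum_right)

lemma dop_inject:
  fixes s t :: "('a::{idom,ring_char_0}, 'n::{finite,linorder}) mpoly"
  assumes "\<And>p. dop s p = dop t p"
  shows "s = t"
proof (rule poly_mapping_eqI_apolar)
  fix g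
  show "apolar s g = apolar t g"
    using assms[of g] apolar_dop[of s g 1] apolar_dop[of t g 1]
    by (simp add: apolar_commute[of _ g])
qed

section \<open>Exterior algebra\<close>

text \<open>\<open>e\<^sub>a \<and> e\<^sub>B = insert_sign B a \<cdot> e\<^bsub>B \<union> {a}\<^esub>\<close> for \<open>a \<notin> B\<close>.\<close>

definition insert_sign :: "'m::linorder set \<Rightarrow> 'm \<Rightarrow> 'b::ring_1" where
  "insert_sign B a = (-1) ^ card {c\<in>B. c < a}"

lemma iota_eq: "iota a \<omega> B = (if a \<notin> B then insert_sign B a * \<omega> (insert a B) else 0)"
  by (simp add: iota_def insert_sign_def)

lemma insert_sign_empty [simp]: "insert_sign {} b = 1"
  by (simp add: insert_sign_def)

lemma insert_sign_square: "insert_sign X b * insert_sign X b = (1::'b::comm_ring_1)"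
  by (simp add: insert_sign_def flip: power_add mult_2)

lemma insert_sign_Un:
  fixes X Y :: "'m::{finite,linorder} set"
  assumes "X \<inter> Y = {}"
  shows "(insert_sign (X \<union> Y) b :: 'b::comm_ring_1) = insert_sign X b * insert_sign Y b"
proof -
  have "{c\<in>X \<union> Y. c < b} = {c\<in>X. c < b} \<union> {c\<in>Y. c < b}"
    by auto
  then have "card {c\<in>X \<union> Y. c < b} = card {c\<in>X. c < b} + card {c\<in>Y. c < b}"
    using assms by (simp add: card_Un_disjoint disjoint_iff)
  then show ?thesis
    by (simp add: insert_sign_def power_add)
qed

lemma insert_sign_insert_less:
  fixes S :: "'m::{finite,linorder} set"
  assumes "x \<notin> S" "x < a"
  shows "(insert_sign (insert x S) a :: 'b::comm_ring_1) = - insert_sign S a"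
proof -
  have "{c\<in>insert x S. c < a} = insert x {c\<in>S. c < a}"
    using assms by auto
  then show ?thesis
    using assms by (simp add: insert_sign_def)
qed

lemma insert_sign_mult_greater:
  fixes X :: "'m::{finite,linorder} set"
  assumes "b \<notin> X"
  shows "(insert_sign X b :: 'b::comm_ring_1) * (-1) ^ card {x\<in>X. b < x} = (-1) ^ card X"
proof -
  have "X = {x\<in>X. x < b} \<union> {x\<in>X. b < x}"
    using assms by auto (metis linorder_neqE)
  then have "card {x\<in>X. x < b} + card {x\<in>X. b < x} = card X"
    by (metis (no_types, lifting) card_Un_disjoint disjoint_iff finite mem_Collect_eq order.asym)
  then show ?thesis
    by (simp add: insert_sign_def flip: power_add)
qed

lemma shuffle_sign_empty_left [simp]: "shuffle_sign {} Y = 1"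
  by (simp add: shuffle_sign_def)

lemma shuffle_sign_insert_right:
  fixes X Y :: "'m::{finite,linorder} set"
  assumes "b \<notin> Y"
  shows "(shuffle_sign X (insert b Y) :: 'b::comm_ring_1) = shuffle_sign X Y * (-1) ^ card {x\<in>X. b < x}"
proof -
  have "{(a, c). a \<in> X \<and> c \<in> insert b Y \<and> c < a}
      = {(a, c). a \<in> X \<and> c \<in> Y \<and> c < a} \<union> (\<lambda>a. (a, b)) ` {x\<in>X. b < x}"
    by auto
  moreover have "{(a, c). a \<in> X \<and> c \<in> Y \<and> c < a} \<inter> (\<lambda>a. (a, b)) ` {x\<in>X. b < x} = {}"
    using assms by auto
  moreover have "card ((\<lambda>a. (a, b)) ` {x\<in>X. b < x}) = card {x\<in>X. b < x}"
    by (rule card_image) (auto simp: inj_on_def)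
  ultimately show ?thesis
    by (simp add: shuffle_sign_def card_Un_disjoint power_add)
qed

lemma shuffle_sign_insert_left:
  fixes X Y :: "'m::{finite,linorder} set"
  assumes "b \<notin> X"
  shows "(shuffle_sign (insert b X) Y :: 'b::comm_ring_1) = shuffle_sign X Y * insert_sign Y b"
proof -
  have "{(a, c). a \<in> insert b X \<and> c \<in> Y \<and> c < a}
      = {(a, c). a \<in> X \<and> c \<in> Y \<and> c < a} \<union> (\<lambda>c. (b, c)) ` {y\<in>Y. y < b}"
    by auto
  moreover have "{(a, c). a \<in> X \<and> c \<in> Y \<and> c < a} \<inter> (\<lambda>c. (b, c)) ` {y\<in>Y. y < b} = {}"
    using assms by auto
  moreover have "card ((\<lambda>c. (b, c)) ` {y\<in>Y. y < b}) = card {y\<in>Y. y < b}"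
    by (rule card_image) (auto simp: inj_on_def)
  ultimately show ?thesis
    by (simp add: shuffle_sign_def insert_sign_def card_Un_disjoint power_add)
qed

lemma shuffle_sign_insert_right_mult:
  fixes X Y :: "'m::{finite,linorder} set"
  assumes "b \<notin> X" "b \<notin> Y"
  shows "(shuffle_sign X (insert b Y) :: 'b::comm_ring_1) * insert_sign X b = (-1) ^ card X * shuffle_sign X Y"
proof -
  have "(shuffle_sign X (insert b Y) :: 'b) * insert_sign X b
      = shuffle_sign X Y * ((-1) ^ card {x\<in>X. b < x} * insert_sign X b)"
    by (simp add: shuffle_sign_insert_right[OF assms(2)] mult.assoc)
  also have "(-1) ^ card {x\<in>X. b < x} * insert_sign X b = ((-1) ^ card X :: 'b)"
    using insert_sign_mult_greater[OF assms(1), where 'b = 'b] by (simp add: mult.commute)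
  finally show ?thesis
    by (simp add: mult.commute)
qed

lemma shuffle_sign_insert_left_mult:
  fixes X Y :: "'m::{finite,linorder} set"
  assumes "b \<notin> X"
  shows "(shuffle_sign (insert b X) Y :: 'b::comm_ring_1) * insert_sign Y b = shuffle_sign X Y"
  by (simp add: shuffle_sign_insert_left[OF assms] mult.assoc insert_sign_square)

lemma wedge_insert:
  fixes u w :: "'m::{finite,linorder} set \<Rightarrow> 'b::comm_ring_1"
  assumes "b \<notin> C"
  shows "wedge u w (insert b C)
       = (\<Sum>X\<in>Pow C. shuffle_sign X (insert b (C - X)) * u X * w (insert b (C - X)))
       + (\<Sum>X\<in>Pow C. shuffle_sign (insert b X) (C - X) * u (insert b X) * w (C - X))"
proof -
  have inj: "inj_on (insert b) (Pow C)"
    using assms unfolding inj_on_def by (metis Pow_iff insert_ident subsetD)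
  have "wedge u w (insert b C) = (\<Sum>X\<in>Pow C. shuffle_sign X (insert b C - X) * u X * w (insert b C - X))
      + (\<Sum>X\<in>Pow C. shuffle_sign (insert b X) (insert b C - insert b X) * u (insert b X) * w (insert b C - insert b X))"
    unfolding wedge_def Pow_insert
    by (subst sum.union_disjoint) (use assms in \<open>auto simp: sum.reindex[OF inj]\<close>)
  also have "\<dots> = (\<Sum>X\<in>Pow C. shuffle_sign X (insert b (C - X)) * u X * w (insert b (C - X)))
       + (\<Sum>X\<in>Pow C. shuffle_sign (insert b X) (C - X) * u (insert b X) * w (C - X))"
  proof -
    have "insert b C - X = insert b (C - X)" "insert b C - insert b X = C - X" if "X \<in> Pow C" for X
      using that assms by auto
    then show ?thesis
      by (intro arg_cong2[where f = "(+)"] sum.cong) auto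
  qed
  finally show ?thesis .
qed

lemma iota_wedge_mem:
  fixes c h :: "'m::{finite,linorder} set \<Rightarrow> 'b::comm_ring_1"
  assumes "b \<in> C"
  shows "wedge (iota b c) h C + wedge (\<lambda>A. (-1) ^ card A * c A) (iota b h) C = 0"
proof -
  define C0 where "C0 = C - {b}"
  have C: "C = insert b C0" "b \<notin> C0"
    using assms by (auto simp: C0_def)
  have "wedge (iota b c) h C = (\<Sum>X\<in>Pow C0.
      shuffle_sign X (insert b (C0 - X)) * insert_sign X b * c (insert b X) * h (insert b (C0 - X)))"
    unfolding C(1) wedge_insert[OF C(2)] using C(2)
    by (auto simp: iota_eq mult_ac intro!: sum.cong)
  moreover have "wedge (\<lambda>A. (-1) ^ card A * c A) (iota b h) C = (\<Sum>X\<in>Pow C0.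
      - (shuffle_sign (insert b X) (C0 - X) * insert_sign (C0 - X) b * (-1) ^ card X)
        * c (insert b X) * h (insert b (C0 - X)))"
    unfolding C(1) wedge_insert[OF C(2)] using C(2)
    by (auto simp: iota_eq mult_ac card_insert_if intro!: sum.cong)
  moreover have "shuffle_sign X (insert b (C0 - X)) * insert_sign X b
      = (shuffle_sign (insert b X) (C0 - X) * insert_sign (C0 - X) b * (-1) ^ card X :: 'b)"
    if "X \<in> Pow C0" for X
  proof -
    have b: "b \<notin> X" "b \<notin> C0 - X"
      using that C(2) by auto
    have "shuffle_sign X (insert b (C0 - X)) * insert_sign X b = (-1) ^ card X * (shuffle_sign X (C0 - X) :: 'b)"
      by (rule shuffle_sign_insert_right_mult[OF b])
    also have "shuffle_sign X (C0 - X) = (shuffle_sign (insert b X) (C0 - X) * insert_sign (C0 - X) b :: 'b)"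
      by (rule shuffle_sign_insert_left_mult[OF b(1), symmetric])
    finally show ?thesis
      by (simp add: mult_ac)
  qed
  ultimately show ?thesis
    by (simp add: sum.distrib[symmetric])
qed

lemma insert_sign_split:
  fixes C :: "'m::{finite,linorder} set"
  assumes "X \<subseteq> C"
  shows "insert_sign C b = insert_sign X b * (insert_sign (C - X) b :: 'b::comm_ring_1)"
  using insert_sign_Un[of X "C - X" b] assms by (simp add: Un_absorb1)

lemma insert_sign_mult_shuffle_sign_insert_right:
  fixes C :: "'m::{finite,linorder} set"
  assumes "X \<subseteq> C" "b \<notin> C"
  shows "insert_sign C b * shuffle_sign X (insert b (C - X))
       = shuffle_sign X (C - X) * (-1) ^ card X * (insert_sign (C - X) b :: 'b::comm_ring_1)"
proof -
  have "insert_sign C b * shuffle_sign X (insert b (C - X))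
      = insert_sign (C - X) b * (shuffle_sign X (insert b (C - X)) * (insert_sign X b :: 'b))"
    using insert_sign_split[OF assms(1), of b, where 'b = 'b] by (simp add: mult_ac)
  also have "\<dots> = insert_sign (C - X) b * ((-1) ^ card X * shuffle_sign X (C - X))"
    using assms by (subst shuffle_sign_insert_right_mult) auto
  finally show ?thesis
    by (simp add: mult_ac)
qed

lemma insert_sign_mult_shuffle_sign_insert_left:
  fixes C :: "'m::{finite,linorder} set"
  assumes "X \<subseteq> C" "b \<notin> C"
  shows "insert_sign C b * shuffle_sign (insert b X) (C - X)
       = shuffle_sign X (C - X) * (insert_sign X b :: 'b::comm_ring_1)"
proof -
  have "insert_sign C b * shuffle_sign (insert b X) (C - X)
      = insert_sign X b * (shuffle_sign (insert b X) (C - X) * (insert_sign (C - X) b :: 'b))"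
    using insert_sign_split[OF assms(1), of b, where 'b = 'b] by (simp add: mult_ac)
  also have "\<dots> = insert_sign X b * shuffle_sign X (C - X)"
    using assms by (subst shuffle_sign_insert_left_mult) auto
  finally show ?thesis
    by (simp add: mult_ac)
qed

lemma iota_wedge_not_mem:
  fixes c h :: "'m::{finite,linorder} set \<Rightarrow> 'b::comm_ring_1"
  assumes "b \<notin> C"
  shows "iota b (wedge c h) C = wedge (iota b c) h C + wedge (\<lambda>A. (-1) ^ card A * c A) (iota b h) C"
proof -
  have b: "b \<notin> X" "b \<notin> C - X" if "X \<in> Pow C" for X
    using that assms by auto
  have "iota b (wedge c h) C
      = (\<Sum>X\<in>Pow C. (insert_sign C b * shuffle_sign X (insert b (C - X))) * c X * h (insert b (C - X)))
      + (\<Sum>X\<in>Pow C. (insert_sign C b * shuffle_sign (insert b X) (C - X)) * c (insert b X) * h (C - X))"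
    using assms by (simp add: iota_eq wedge_insert distrib_left sum_distrib_left mult.assoc)
  also have "\<dots> = (\<Sum>X\<in>Pow C. shuffle_sign X (C - X) * (-1) ^ card X * insert_sign (C - X) b * c X * h (insert b (C - X)))
      + (\<Sum>X\<in>Pow C. shuffle_sign X (C - X) * insert_sign X b * c (insert b X) * h (C - X))"
    using assms by (intro arg_cong2[where f = "(+)"] sum.cong refl)
      (simp_all add: insert_sign_mult_shuffle_sign_insert_right insert_sign_mult_shuffle_sign_insert_left)
  also have "(\<Sum>X\<in>Pow C. shuffle_sign X (C - X) * (-1) ^ card X * insert_sign (C - X) b * c X * h (insert b (C - X)))
      = wedge (\<lambda>A. (-1) ^ card A * c A) (iota b h) C"
    unfolding wedge_def by (intro sum.cong refl) (use b in \<open>simp add: iota_eq mult_ac\<close>)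
  also have "(\<Sum>X\<in>Pow C. shuffle_sign X (C - X) * insert_sign X b * c (insert b X) * h (C - X))
      = wedge (iota b c) h C"
    unfolding wedge_def by (intro sum.cong refl) (use b in \<open>simp add: iota_eq mult_ac\<close>)
  finally show ?thesis
    by (simp add: add.commute)
qed

lemma iota_wedge:
  fixes c h :: "'m::{finite,linorder} set \<Rightarrow> 'b::comm_ring_1"
  shows "iota b (wedge c h) C = wedge (iota b c) h C + wedge (\<lambda>A. (-1) ^ card A * c A) (iota b h) C"
proof (cases "b \<in> C")
  case True
  then show ?thesis
    using iota_wedge_mem[OF True, of c h] by (simp add: iota_eq)
next
  case False
  then show ?thesis
    by (rule iota_wedge_not_mem)
qed

lemma wedge_ext_one_left: "wedge (\<lambda>A. k * ext_one A) w C = k * (w C :: 'b::comm_ring_1)"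
proof -
  have "wedge (\<lambda>A. k * ext_one A) w C = (\<Sum>A\<in>Pow C. if A = {} then k * w C else 0)"
    unfolding wedge_def by (intro sum.cong refl) (simp add: ext_one_def)
  then show ?thesis
    by (simp add: sum.delta')
qed

lemma wedge_uminus_left: "wedge (\<lambda>A. - u A) w C = - (wedge u w C :: 'b::comm_ring_1)"
  by (simp add: wedge_def sum_negf)

lemma wedge_sum_right:
  "wedge u (\<lambda>C. \<Sum>i\<in>I. k i * w i C) C = (\<Sum>i\<in>I. k i * (wedge u (w i) C :: 'b::comm_ring_1))"
  unfolding wedge_def by (simp add: sum_distrib_left sum_distrib_right mult_ac) (rule sum.swap)

lemma wedge_sum_left:
  "wedge (\<lambda>A. \<Sum>i\<in>I. k i * u i A) w C = (\<Sum>i\<in>I. k i * (wedge (u i) w C :: 'b::comm_ring_1))"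
  unfolding wedge_def by (simp add: sum_distrib_left sum_distrib_right mult_ac) (rule sum.swap)

lemma iota_ext_vec:
  fixes u :: "'m::{finite,linorder} \<Rightarrow> 'b::comm_ring_1"
  shows "iota b (ext_vec u) = (\<lambda>A. u b * ext_one A)"
proof
  fix A :: "'m set"
  have "b \<notin> A \<Longrightarrow> card (insert b A) = 1 \<longleftrightarrow> A = {}"
    by simp
  then show "iota b (ext_vec u) A = u b * ext_one A"
    by (auto simp: iota_eq ext_one_def ext_vec_def)
qed

lemma iota_wedge_ext_vec:
  "iota b (wedge (ext_vec u) w) C = u b * w C - (wedge (ext_vec u) (iota b w) C :: 'b::comm_ring_1)"
proof -
  have "(\<lambda>A. (-1) ^ card A * ext_vec u A) = (\<lambda>A. - ext_vec u A)"
    by (auto simp: ext_vec_def fun_eq_iff)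
  then show ?thesis
    by (simp add: iota_wedge iota_ext_vec wedge_ext_one_left wedge_uminus_left)
qed

definition wedge_columns :: "('a::comm_ring_1, 'm::{finite,linorder}) sqmat \<Rightarrow> 'm list \<Rightarrow> 'm set \<Rightarrow> 'a" where
  "wedge_columns R xs = foldr (\<lambda>a acc. wedge (ext_vec (\<lambda>b. R $ b $ a)) acc) xs ext_one"

lemma iota_wedge_columns:
  fixes R :: "('a::comm_ring_1, 'm::{finite,linorder}) sqmat"
  assumes "sorted_wrt (<) xs"
  shows "iota b (wedge_columns R xs) C
       = (\<Sum>a\<in>set xs. R $ b $ a * insert_sign (set xs - {a}) a * wedge_columns R (remove1 a xs) C)"
  using assms
proof (induct xs arbitrary: C)
  case Nil
  show ?case
    by (simp add: wedge_columns_def iota_eq ext_one_def)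
next
  case (Cons x xs)
  have xs: "sorted_wrt (<) xs" and less: "\<forall>y\<in>set xs. x < y"
    using Cons.prems by auto
  then have x: "x \<notin> set xs"
    by auto
  have wedge_Cons: "wedge_columns R (x # xs) = wedge (ext_vec (\<lambda>b. R $ b $ x)) (wedge_columns R xs)"
    by (simp add: wedge_columns_def)
  have IH: "iota b (wedge_columns R xs) = (\<lambda>C. \<Sum>a\<in>set xs.
      (R $ b $ a * insert_sign (set xs - {a}) a) * wedge_columns R (remove1 a xs) C)"
    using Cons.hyps[OF xs] by (auto simp: fun_eq_iff mult.assoc)
  have "iota b (wedge_columns R (x # xs)) C = R $ b $ x * wedge_columns R xs C
      - (\<Sum>a\<in>set xs. (R $ b $ a * insert_sign (set xs - {a}) a) * wedge_columns R (x # remove1 a xs) C)"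
    unfolding wedge_Cons iota_wedge_ext_vec IH wedge_sum_right by (simp add: wedge_columns_def)
  also have "\<dots> = R $ b $ x * insert_sign (set xs) x * wedge_columns R xs C
      + (\<Sum>a\<in>set xs. R $ b $ a * insert_sign (insert x (set xs - {a})) a * wedge_columns R (x # remove1 a xs) C)"
  proof -
    have none_less: "{c \<in> set xs. c < x} = {}"
      using less by auto
    have "insert_sign (set xs) x = (1 :: 'a)"
      unfolding insert_sign_def none_less by simp
    moreover have "insert_sign (insert x (set xs - {a})) a = (- insert_sign (set xs - {a}) a :: 'a)" if "a \<in> set xs" for a
      using that less x by (subst insert_sign_insert_less) auto
    ultimately show ?thesis
      by (simp add: sum_negf[symmetric] cong: sum.cong)
  qed
  also have "\<dots> = (\<Sum>a\<in>set (x # xs). R $ b $ a * insert_sign (set (x # xs) - {a}) a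
      * wedge_columns R (remove1 a (x # xs)) C)"
  proof -
    have "set (x # xs) - {a} = insert x (set xs - {a})" "remove1 a (x # xs) = x # remove1 a xs"
      if "a \<in> set xs" for a
      using that x by auto
    moreover have "set (x # xs) - {x} = set xs"
      using x by auto
    ultimately show ?thesis
      using x by (simp cong: sum.cong)
  qed
  finally show ?case .
qed

lemma iota_ext_act:
  fixes R :: "('a::comm_ring_1, 'm::{finite,linorder}) sqmat"
  shows "iota b (ext_act R A) C = (\<Sum>a\<in>A. R $ b $ a * insert_sign (A - {a}) a * ext_act R (A - {a}) C)"
proof -
  have "ext_act R A = wedge_columns R (sorted_list_of_set A)" for A
    by (simp add: ext_act_def wedge_columns_def)
  then show ?thesis
    using iota_wedge_columns[of "sorted_list_of_set A" b R C]
    by (simp add: sorted_list_of_set_remove)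
qed

definition fibre_perms :: "'x set \<Rightarrow> ('x \<Rightarrow> 'y) \<Rightarrow> ('x \<Rightarrow> 'x) set" where
  "fibre_perms S f = {\<sigma>. \<sigma> permutes S \<and> (\<forall>x\<in>S. f (\<sigma> x) = f x)}"

lemma permutes_bij_betw_invariant:
  assumes "\<sigma> permutes S" "finite S" "T \<subseteq> S" "\<sigma> ` T \<subseteq> T"
  shows "bij_betw \<sigma> T T"
proof -
  have "inj_on \<sigma> T"
    using assms(1) permutes_inj_on by blast
  moreover have "\<sigma> ` T = T"
    using endo_inj_surj[OF finite_subset[OF assms(3,2)] assms(4) calculation] .
  ultimately show ?thesis
    by (simp add: bij_betw_def)
qed

lemma comp_permutes_disjoint:
  assumes "\<tau> permutes F" "\<sigma> permutes T" "F \<inter> T = {}"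
  shows "(\<tau> \<circ> \<sigma>) x = (if x \<in> F then \<tau> x else \<sigma> x)"
proof (cases "x \<in> T")
  case True
  then have "\<sigma> x \<notin> F"
    using assms(2,3) permutes_in_image[OF assms(2), of x] by auto
  then show ?thesis
    using True assms by (auto simp: permutes_not_in)
next
  case False
  then show ?thesis
    using assms by (simp add: permutes_not_in)
qed

lemma fibre_perms_restrict:
  assumes "finite S" "F = {x\<in>S. f x = v}" "\<sigma> \<in> fibre_perms S f"
  shows "restrict_id \<sigma> F permutes F" "restrict_id \<sigma> (S - F) \<in> fibre_perms (S - F) f"
proof -
  have \<sigma>: "\<sigma> permutes S" "\<And>x. x \<in> S \<Longrightarrow> f (\<sigma> x) = f x"
    using assms(3) by (auto simp: fibre_perms_def)
  have "\<sigma> ` F \<subseteq> F" "\<sigma> ` (S - F) \<subseteq> S - F"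
    using \<sigma> assms(2) by (auto simp: permutes_in_image)
  then have "bij_betw \<sigma> F F" "bij_betw \<sigma> (S - F) (S - F)"
    using \<sigma>(1) assms(1,2) by (auto intro: permutes_bij_betw_invariant)
  then show "restrict_id \<sigma> F permutes F" "restrict_id \<sigma> (S - F) \<in> fibre_perms (S - F) f"
    using \<sigma>(2) by (simp_all add: fibre_perms_def permutes_restrict_id)
qed

lemma fibre_perms_split:
  assumes "finite S" and F: "F = {x\<in>S. f x = v}"
  shows "bij_betw (\<lambda>(\<tau>, \<sigma>). \<tau> \<circ> \<sigma>) ({\<tau>. \<tau> permutes F} \<times> fibre_perms (S - F) f) (fibre_perms S f)"
proof (rule bij_betwI[where g = "\<lambda>\<sigma>. (restrict_id \<sigma> F, restrict_id \<sigma> (S - F))"])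
  have F_sub: "F \<subseteq> S" and disj: "F \<inter> (S - F) = {}"
    using F by auto
  show "(\<lambda>(\<tau>, \<sigma>). \<tau> \<circ> \<sigma>) \<in> {\<tau>. \<tau> permutes F} \<times> fibre_perms (S - F) f \<rightarrow> fibre_perms S f"
  proof (intro Pi_I, clarify)
    fix \<tau> \<sigma> assume \<tau>: "\<tau> permutes F" and "\<sigma> \<in> fibre_perms (S - F) f"
    then have \<sigma>: "\<sigma> permutes S - F" "\<And>x. x \<in> S - F \<Longrightarrow> f (\<sigma> x) = f x"
      by (auto simp: fibre_perms_def)
    have "\<tau> \<circ> \<sigma> permutes S"
      using permutes_compose[OF permutes_subset[OF \<sigma>(1)] permutes_subset[OF \<tau> F_sub]] by blast
    moreover have "f ((\<tau> \<circ> \<sigma>) x) = f x" if "x \<in> S" for x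
      using that F \<sigma>(2) permutes_in_image[OF \<tau>] comp_permutes_disjoint[OF \<tau> \<sigma>(1) disj] by auto
    ultimately show "\<tau> \<circ> \<sigma> \<in> fibre_perms S f"
      by (simp add: fibre_perms_def)
  qed
  show "(\<lambda>\<sigma>. (restrict_id \<sigma> F, restrict_id \<sigma> (S - F))) \<in> fibre_perms S f
      \<rightarrow> {\<tau>. \<tau> permutes F} \<times> fibre_perms (S - F) f"
    using fibre_perms_restrict[OF assms] by blast
  show "(\<lambda>\<sigma>. (restrict_id \<sigma> F, restrict_id \<sigma> (S - F))) ((\<lambda>(\<tau>, \<sigma>). \<tau> \<circ> \<sigma>) p) = p"
    if p_mem: "p \<in> {\<tau>. \<tau> permutes F} \<times> fibre_perms (S - F) f" for p
  proof -
    obtain \<tau> \<sigma> where p: "p = (\<tau>, \<sigma>)" and \<tau>: "\<tau> permutes F" and \<sigma>: "\<sigma> permutes S - F"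
      using p_mem by (cases p) (auto simp: fibre_perms_def)
    then show ?thesis
      using comp_permutes_disjoint[OF \<tau> \<sigma> disj]
      by (auto simp: restrict_id_def fun_eq_iff permutes_not_in)
  qed
  show "(\<lambda>(\<tau>, \<sigma>). \<tau> \<circ> \<sigma>) (restrict_id \<sigma> F, restrict_id \<sigma> (S - F)) = \<sigma>"
    if "\<sigma> \<in> fibre_perms S f" for \<sigma>
  proof -
    have \<sigma>: "\<sigma> permutes S" "\<And>x. x \<in> S \<Longrightarrow> f (\<sigma> x) = f x"
      using that by (auto simp: fibre_perms_def)
    have "\<sigma> x \<in> S" if "x \<in> S" for x
      using that permutes_in_image[OF \<sigma>(1)] by simp
    then show ?thesis
      using \<sigma> F by (auto simp: restrict_id_def fun_eq_iff permutes_not_in)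
  qed
qed

lemma card_fibre_perms:
  assumes "finite V" "finite S" "f ` S \<subseteq> V"
  shows "card (fibre_perms S f) = (\<Prod>b\<in>V. fact (card {x\<in>S. f x = b}))"
  using assms
proof (induct V arbitrary: S rule: finite_induct)
  case empty
  then show ?case
    by (simp add: fibre_perms_def permutes_empty)
next
  case (insert v V S)
  define F where "F = {x\<in>S. f x = v}"
  have "card (fibre_perms S f) = card ({\<tau>. \<tau> permutes F} \<times> fibre_perms (S - F) f)"
    using bij_betw_same_card[OF fibre_perms_split[OF insert.prems(1) F_def]] by simp
  also have "\<dots> = fact (card F) * (\<Prod>b\<in>V. fact (card {x\<in>S - F. f x = b}))"
  proof -
    have "card (fibre_perms (S - F) f) = (\<Prod>b\<in>V. fact (card {x\<in>S - F. f x = b}))"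
      using insert by (intro insert.hyps(3)) (auto simp: F_def)
    moreover have "card {\<tau>. \<tau> permutes F} = fact (card F)"
      using insert.prems(1) by (simp add: card_permutations F_def)
    ultimately show ?thesis
      by (simp add: card_cartesian_product)
  qed
  also have "(\<Prod>b\<in>V. fact (card {x\<in>S - F. f x = b})) = (\<Prod>b\<in>V. fact (card {x\<in>S. f x = b}))"
    using insert.hyps(2) by (intro prod.cong refl arg_cong[where f = "\<lambda>X. fact (card X)"]) (auto simp: F_def)
  finally show ?case
    using insert.hyps by (simp add: F_def)
qed

lemma count_list_mono_list: "count_list (mono_list \<alpha>) k = lookup \<alpha> (k::'n::{finite,linorder})"
proof -
  have "count_list (mono_list \<alpha>) k = (\<Sum>j\<in>UNIV. length (filter ((=) k) (replicate (lookup \<alpha> j) j)))"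
    by (simp add: count_list_eq_length_filter mono_list_def filter_concat length_concat o_def
        sum_list_distinct_conv_sum_set)
  also have "\<dots> = (\<Sum>j\<in>UNIV. if j = k then lookup \<alpha> j else 0)"
    by (intro sum.cong refl) auto
  finally show ?thesis
    by simp
qed

lemma of_bool_prod: "finite I \<Longrightarrow> (\<Prod>i\<in>I. (of_bool (P i) :: 'a::comm_semiring_1)) = of_bool (\<forall>i\<in>I. P i)"
  by (induct I rule: finite_induct) auto

lemma sym_pair_eq: "(sym_pair \<alpha> \<beta> :: 'a::comm_ring_1) = (if \<alpha> = \<beta> then of_nat (multi_fact \<alpha>) else 0)"
proof -
  define xs where "xs = mono_list \<alpha>"
  define ys where "ys = mono_list \<beta>"
  define n where "n = length xs"
  define P where "P = {\<sigma>. \<sigma> permutes {..<n}} \<inter> {\<sigma>. \<forall>i\<in>{..<n}. xs ! i = ys ! \<sigma> i}"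
  have sym_pair: "(sym_pair \<alpha> \<beta> :: 'a) = (if length xs = length ys then of_nat (card P) else 0)"
    unfolding sym_pair_def Let_def xs_def[symmetric] ys_def[symmetric] n_def[symmetric] lessThan_def[symmetric]
    by (simp add: of_bool_prod P_def finite_permutations)
  show ?thesis
  proof (cases "\<alpha> = \<beta>")
    case True
    have "P = fibre_perms {..<n} (\<lambda>i. xs ! i)"
      using True by (auto simp: P_def fibre_perms_def xs_def ys_def)
    moreover have "card (fibre_perms {..<n} (\<lambda>i. xs ! i)) = (\<Prod>b\<in>UNIV. fact (card {i\<in>{..<n}. xs ! i = b}))"
      by (rule card_fibre_perms) auto
    moreover have "card {i\<in>{..<n}. xs ! i = b} = lookup \<alpha> b" for b
      using count_list_mono_list[of \<alpha> b]
      by (simp add: xs_def n_def count_list_eq_length_filter length_filter_conv_card eq_commute lessThan_def)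
    ultimately have "card P = multi_fact \<alpha>"
      by (simp add: multi_fact_def)
    then show ?thesis
      using True sym_pair by (simp add: xs_def ys_def)
  next
    case False
    have "P = {}" if len: "length xs = length ys"
    proof (rule ccontr)
      assume "P \<noteq> {}"
      then obtain \<sigma> where \<sigma>: "\<sigma> permutes {..<length ys}" "\<forall>i<length xs. xs ! i = ys ! \<sigma> i"
        using len by (auto simp: P_def n_def)
      then have "xs = permute_list \<sigma> ys"
        using len by (intro nth_equalityI) (simp_all add: permute_list_nth)
      then have "mset xs = mset ys"
        using \<sigma>(1) by simp
      then have "lookup \<alpha> k = lookup \<beta> k" for k
        by (metis count_list_mono_list count_mset xs_def ys_def)
      then show False
        using False by (simp add: poly_mapping_eqI)
    qed
    then show ?thesis
      using False sym_pair by simp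
  qed
qed

lemma sorted_list_of_set_nth_match_iff:
  fixes A B :: "'m::{finite,linorder} set"
  assumes "\<sigma> permutes {..<card A}" "card A = card B"
  shows "(\<forall>i<card A. sorted_list_of_set A ! i = sorted_list_of_set B ! \<sigma> i) \<longleftrightarrow> A = B \<and> \<sigma> = id"
proof
  let ?as = "sorted_list_of_set A" and ?bs = "sorted_list_of_set B"
  assume match: "\<forall>i<card A. ?as ! i = ?bs ! \<sigma> i"
  have "A \<subseteq> B"
  proof
    fix x assume "x \<in> A"
    then obtain i where "i < card A" "x = ?as ! i"
      by (metis in_set_conv_nth length_sorted_list_of_set set_sorted_list_of_set finite)
    then show "x \<in> B"
      using match assms permutes_in_image[OF assms(1), of i]
      by (metis lessThan_iff length_sorted_list_of_set nth_mem set_sorted_list_of_set finite)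
  qed
  then have "A = B"
    using assms(2) by (simp add: card_subset_eq)
  moreover have "\<sigma> i = i" for i
  proof (cases "i < card A")
    case True
    then have "\<sigma> i < card A"
      using permutes_in_image[OF assms(1)] by simp
    then show ?thesis
      using True match \<open>A = B\<close> nth_eq_iff_index_eq[of ?as i "\<sigma> i"] by simp
  next
    case False
    then show ?thesis
      using assms(1) by (simp add: permutes_not_in)
  qed
  ultimately show "A = B \<and> \<sigma> = id"
    by auto
qed simp

lemma ext_pair_eq: "(ext_pair A B :: 'a::comm_ring_1) = (if A = B then 1 else 0)"
proof -
  let ?n = "card A"
  have "(ext_pair A B :: 'a) = (if card A = card B then
      (\<Sum>\<sigma>\<in>{\<sigma>. \<sigma> permutes {..<?n}}. of_int (sign \<sigma>)
        * of_bool (\<forall>i<?n. sorted_list_of_set A ! i = sorted_list_of_set B ! \<sigma> i)) else 0)"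
    unfolding ext_pair_def Let_def by (simp add: of_bool_prod lessThan_def)
  also have "\<dots> = (if card A = card B then
      (\<Sum>\<sigma>\<in>{\<sigma>. \<sigma> permutes {..<?n}}. if \<sigma> = id then of_bool (A = B) else 0) else 0)"
  proof (intro if_cong refl sum.cong)
    fix \<sigma> assume "card A = card B" "\<sigma> \<in> {\<sigma>. \<sigma> permutes {..<?n}}"
    then show "of_int (sign \<sigma>) * of_bool (\<forall>i<?n. sorted_list_of_set A ! i = sorted_list_of_set B ! \<sigma> i)
        = (if \<sigma> = id then of_bool (A = B) else (0::'a))"
      using sorted_list_of_set_nth_match_iff[of \<sigma> A B] by (auto simp: sign_id)
  qed
  also have "\<dots> = (if A = B then 1 else 0)"
    by (auto simp: finite_permutations permutes_id sum.delta')
  finally show ?thesis .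
qed

lemma pairing_eq:
  fixes \<omega> \<xi> :: "'m::{finite,linorder} set \<Rightarrow> ('a::comm_ring_1, 'n::{finite,linorder}) mpoly"
  shows "pairing \<omega> \<xi> = (\<Sum>A\<in>UNIV. apolar (\<omega> A) (\<xi> A))"
proof -
  have "apolar f g = (\<Sum>\<alpha>\<in>keys f. \<Sum>\<beta>\<in>keys g. lookup f \<alpha> * lookup g \<beta> * sym_pair \<alpha> \<beta>)"
    for f g :: "('a, 'n) mpoly"
    unfolding apolar_def
    by (intro sum.cong refl) (auto simp: sym_pair_eq if_distrib sum.delta in_keys_iff cong: if_cong)
  moreover have "(\<Sum>B\<in>UNIV. (if A = B then 1 else 0) * g B) = (g A :: 'a)" for A and g :: "'m set \<Rightarrow> 'a"
    by (simp add: if_distrib[where f = "\<lambda>x. x * _"] cong: if_cong)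
  ultimately show ?thesis
    by (simp add: pairing_def ext_pair_eq)
qed

section \<open>The adjoint of \<open>d*\<close> and the ideal \<open>J\<^sub>M\<close>\<close>

definition dstar_adjoint :: "('m::{finite,linorder} \<Rightarrow> ('a::comm_ring_1, 'n::{finite,linorder}) mpoly)
    \<Rightarrow> ('m set \<Rightarrow> ('a, 'n) mpoly) \<Rightarrow> ('m set \<Rightarrow> ('a, 'n) mpoly)" where
  "dstar_adjoint s \<xi> = (\<lambda>A. \<Sum>a\<in>UNIV. s a * iota a \<xi> A)"

lemma eps_eq: "eps a \<omega> B = (if a \<in> B then insert_sign (B - {a}) a * \<omega> (B - {a}) else 0)"
proof -
  have "{c\<in>B. c < a} = {c\<in>B - {a}. c < a}"
    by auto
  then show ?thesis
    by (simp add: eps_def insert_sign_def)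
qed

lemma apolar_insert_sign_left: "apolar (insert_sign X a * f) g = insert_sign X a * apolar f g"
  by (simp add: insert_sign_def apolar_neg_one_power_mult_left)

lemma apolar_insert_sign_right: "apolar f (insert_sign X a * g) = insert_sign X a * apolar f g"
  by (simp add: insert_sign_def apolar_neg_one_power_mult_right)

lemma sum_mem_reindex_insert:
  fixes g :: "'m::finite set \<Rightarrow> 'b::comm_monoid_add"
  shows "(\<Sum>B\<in>UNIV. if a \<in> B then g B else 0) = (\<Sum>A\<in>UNIV. if a \<notin> A then g (insert a A) else 0)"
proof -
  have "(\<Sum>B\<in>UNIV. if a \<in> B then g B else 0) = (\<Sum>B\<in>{B. a \<in> B}. g B)"
    by (simp add: sum.If_cases Int_def)
  also have "\<dots> = (\<Sum>A\<in>{A. a \<notin> A}. g (insert a A))"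
    by (rule sum.reindex_bij_witness[of _ "insert a" "\<lambda>B. B - {a}"]) (auto simp: insert_absorb)
  also have "\<dots> = (\<Sum>A\<in>UNIV. if a \<notin> A then g (insert a A) else 0)"
    by (simp add: sum.If_cases Int_def)
  finally show ?thesis .
qed

lemma pairing_dstar: "pairing (dstar s \<omega>) \<xi> = pairing \<omega> (dstar_adjoint s \<xi>)"
proof -
  have "pairing (dstar s \<omega>) \<xi> = (\<Sum>a\<in>UNIV. \<Sum>B\<in>UNIV.
      if a \<in> B then insert_sign (B - {a}) a * apolar (\<omega> (B - {a})) (s a * \<xi> B) else 0)"
    unfolding pairing_eq dstar_def
    by (subst sum.swap) (simp add: apolar_sum_left eps_eq Dform_def apolar_insert_sign_left apolar_dop
        if_distrib[of "\<lambda>x. apolar x _"] cong: if_cong)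
  also have "\<dots> = (\<Sum>a\<in>UNIV. \<Sum>A\<in>UNIV.
      if a \<notin> A then insert_sign A a * apolar (\<omega> A) (s a * \<xi> (insert a A)) else 0)"
    by (simp only: sum_mem_reindex_insert) (simp cong: if_cong)
  also have "\<dots> = pairing \<omega> (dstar_adjoint s \<xi>)"
    unfolding pairing_eq dstar_adjoint_def
    by (subst sum.swap) (simp add: apolar_sum_right iota_eq mult.left_commute[of "s _"] apolar_insert_sign_right
        if_distrib[of "\<lambda>x. apolar _ (_ * x)"] cong: if_cong)
  finally show ?thesis .
qed

lemma iota_add: "iota a (\<lambda>C. X C + Y C) C = iota a X C + (iota a Y C :: 'b::ring_1)"
  by (simp add: iota_def distrib_left)

lemma dstar_adjoint_add:
  "dstar_adjoint s (\<lambda>C. X C + Y C) C = dstar_adjoint s X C + dstar_adjoint s Y C"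
  by (simp add: dstar_adjoint_def iota_add distrib_left sum.distrib)

lemma iota_zero: "iota a (\<lambda>_. 0) C = (0 :: 'b::ring_1)"
  by (simp add: iota_def)

lemma dstar_adjoint_zero: "dstar_adjoint s (\<lambda>_. 0) = (\<lambda>_. 0)"
  by (simp add: dstar_adjoint_def iota_zero)

lemma dstar_adjoint_wedge:
  "dstar_adjoint s (wedge c h) C
     = wedge (dstar_adjoint s c) h C + wedge (\<lambda>A. (-1) ^ card A * c A) (dstar_adjoint s h) C"
  by (simp add: dstar_adjoint_def iota_wedge distrib_left sum.distrib wedge_sum_left wedge_sum_right)

lemma dstar_adjoint_JM:
  assumes "\<xi> \<in> JM G \<rho>"
    and inv: "\<And>h. \<forall>g\<in>G. act_SVLM g \<rho> h = h \<Longrightarrow> \<forall>g\<in>G. act_SVLM g \<rho> (dstar_adjoint s h) = dstar_adjoint s h"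
    and deg: "\<And>h d. homog_form d h \<Longrightarrow> d > 0 \<Longrightarrow> \<exists>d'>0. homog_form d' (dstar_adjoint s h)"
  shows "dstar_adjoint s \<xi> \<in> JM G \<rho>"
  using assms(1)
proof (induct rule: JM.induct)
  case JM_zero
  then show ?case
    by (simp add: dstar_adjoint_zero JM.JM_zero)
next
  case (JM_add h d \<xi> c)
  obtain d' where "d' > 0" "homog_form d' (dstar_adjoint s h)"
    using deg[OF JM_add(2,3)] by blast
  then have "(\<lambda>C. wedge (\<lambda>A. (-1) ^ card A * c A) (dstar_adjoint s h) C + dstar_adjoint s \<xi> C) \<in> JM G \<rho>"
    using JM_add by (intro JM.JM_add inv) auto
  then have "(\<lambda>C. wedge (dstar_adjoint s c) h C
      + (wedge (\<lambda>A. (-1) ^ card A * c A) (dstar_adjoint s h) C + dstar_adjoint s \<xi> C)) \<in> JM G \<rho>"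
    using JM_add by (intro JM.JM_add[where \<xi> = "\<lambda>C. _ C + _ C", OF JM_add(1,2,3)])
  then show ?case
    by (simp add: fun_eq_iff dstar_adjoint_add dstar_adjoint_wedge add.assoc)
qed

lemma act_SV_iota: "act_SV g (iota a h A) = iota a (\<lambda>B. act_SV g (h B)) A"
  by (simp add: iota_def act_SV_neg_one_power_mult) (simp add: act_SV_def)

lemma pconst_iota:
  fixes f :: "'m::linorder set \<Rightarrow> 'a::comm_ring_1"
  shows "pconst (iota b f C) = iota b (\<lambda>A. pconst (f A)) C"
  by (simp add: iota_def pconst_mult pconst_neg_one_power)

lemma iota_sum_mult:
  "iota b (\<lambda>C'. \<Sum>A\<in>S. F A C' * Y A) C = (\<Sum>A\<in>S. iota b (F A) C * (Y A :: 'b::comm_ring_1))"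
  by (simp add: iota_def sum_distrib_left mult.assoc)

lemma iota_ext_act_sum:
  fixes R :: "('a::comm_ring_1, 'm::{finite,linorder}) sqmat" and Y :: "'m set \<Rightarrow> ('a, 'n::{finite,linorder}) mpoly"
  shows "iota b (\<lambda>C'. \<Sum>A\<in>UNIV. pconst (ext_act R A C') * Y A) C
       = (\<Sum>c\<in>UNIV. pconst (R $ b $ c) * (\<Sum>A\<in>UNIV. pconst (ext_act R A C) * iota c Y A))"
proof -
  have "iota b (\<lambda>C'. \<Sum>A\<in>UNIV. pconst (ext_act R A C') * Y A) C
      = (\<Sum>A\<in>UNIV. \<Sum>c\<in>UNIV.
          if c \<in> A then pconst (R $ b $ c * insert_sign (A - {c}) c * ext_act R (A - {c}) C) * Y A else 0)"
    by (simp add: iota_sum_mult iota_ext_act pconst_sum sum_distrib_right sum.If_cases flip: pconst_iota)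
  also have "\<dots> = (\<Sum>c\<in>UNIV. \<Sum>A\<in>UNIV.
      if c \<notin> A then pconst (R $ b $ c * insert_sign A c * ext_act R A C) * Y (insert c A) else 0)"
  proof -
    have "(\<Sum>A\<in>UNIV. if c \<in> A then pconst (R $ b $ c * insert_sign (A - {c}) c * ext_act R (A - {c}) C) * Y A else 0)
        = (\<Sum>A\<in>UNIV. if c \<notin> A then pconst (R $ b $ c * insert_sign A c * ext_act R A C) * Y (insert c A) else 0)"
      for c
      by (subst sum_mem_reindex_insert) (simp cong: if_cong)
    then show ?thesis
      by (subst sum.swap) simp
  qed
  also have "\<dots> = (\<Sum>c\<in>UNIV. pconst (R $ b $ c) * (\<Sum>A\<in>UNIV. pconst (ext_act R A C) * iota c Y A))"
    by (simp add: iota_eq sum_distrib_left pconst_mult insert_sign_def pconst_neg_one_power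
        if_distrib[of "\<lambda>x. _ * x"] mult_ac cong: if_cong)
  finally show ?thesis .
qed

lemma ext_act_sum_iota:
  fixes R R' :: "('a::comm_ring_1, 'm::{finite,linorder}) sqmat" and Y :: "'m set \<Rightarrow> ('a, 'n::{finite,linorder}) mpoly"
  assumes "R' ** R = mat 1"
  shows "(\<Sum>A\<in>UNIV. pconst (ext_act R A C) * iota a Y A)
       = (\<Sum>b\<in>UNIV. pconst (R' $ a $ b) * iota b (\<lambda>C'. \<Sum>A\<in>UNIV. pconst (ext_act R A C') * Y A) C)"
proof -
  define Z where "Z c = (\<Sum>A\<in>UNIV. pconst (ext_act R A C) * iota c Y A)" for c
  have "(\<Sum>b\<in>UNIV. pconst (R' $ a $ b) * iota b (\<lambda>C'. \<Sum>A\<in>UNIV. pconst (ext_act R A C') * Y A) C)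
      = (\<Sum>b\<in>UNIV. \<Sum>c\<in>UNIV. pconst (R' $ a $ b * R $ b $ c) * Z c)"
    unfolding iota_ext_act_sum Z_def[symmetric] by (simp add: sum_distrib_left pconst_mult mult.assoc)
  also have "\<dots> = (\<Sum>c\<in>UNIV. pconst ((R' ** R) $ a $ c) * Z c)"
    by (subst sum.swap) (simp add: matrix_matrix_mult_def pconst_sum sum_distrib_right)
  also have "\<dots> = Z a"
    by (simp add: assms mat_def pconst_1 if_distrib[of "\<lambda>x. pconst x * _"] cong: if_cong)
  finally show ?thesis
    by (simp add: Z_def)
qed

lemma act_SVLM_dstar_adjoint:
  assumes "act_SVLM g \<rho> h = h" "act_SVMs g \<rho> s = s" "matrix_inv (\<rho> g) ** \<rho> g = mat 1"
  shows "act_SVLM g \<rho> (dstar_adjoint s h) = dstar_adjoint s h"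
proof
  fix C
  let ?R = "\<rho> g" and ?R' = "matrix_inv (\<rho> g)"
  have "act_SVLM g \<rho> (dstar_adjoint s h) C = (\<Sum>a\<in>UNIV. act_SV g (s a)
      * (\<Sum>A\<in>UNIV. pconst (ext_act ?R A C) * iota a (\<lambda>B. act_SV g (h B)) A))"
    by (simp add: act_SVLM_def dstar_adjoint_def act_SV_sum act_SV_mult act_SV_iota
        sum_distrib_left mult.left_commute) (rule sum.swap)
  also have "\<dots> = (\<Sum>a\<in>UNIV. act_SV g (s a) * (\<Sum>b\<in>UNIV. pconst (?R' $ a $ b) * iota b h C))"
    by (simp only: ext_act_sum_iota[OF assms(3)]) (simp add: act_SVLM_def[symmetric] assms(1))
  also have "\<dots> = (\<Sum>b\<in>UNIV. (\<Sum>a\<in>UNIV. pconst (?R' $ a $ b) * act_SV g (s a)) * iota b h C)"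
    by (simp add: sum_distrib_left sum_distrib_right mult_ac) (rule sum.swap)
  also have "\<dots> = dstar_adjoint s h C"
    using fun_cong[OF assms(2)] by (simp add: act_SVMs_def dstar_adjoint_def)
  finally show "act_SVLM g \<rho> (dstar_adjoint s h) C = dstar_adjoint s h C" .
qed

lemma homog_form_dstar_adjoint:
  assumes h: "homog_form d h" and s: "\<forall>a. homog_poly e (s a)"
  shows "homog_form (d + e - 1) (dstar_adjoint s h)"
  unfolding homog_form_def
proof (intro allI ballI)
  fix A \<alpha> assume "\<alpha> \<in> keys (dstar_adjoint s h A)"
  then have "\<alpha> \<in> (\<Union>a\<in>UNIV. keys (s a * iota a h A))"
    unfolding dstar_adjoint_def by (rule subsetD[OF keys_sum])
  then obtain a where "\<alpha> \<in> keys (s a * iota a h A)"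
    by blast
  then have "\<alpha> \<in> {\<beta> + \<gamma> |\<beta> \<gamma>. \<beta> \<in> keys (s a) \<and> \<gamma> \<in> keys (iota a h A)}"
    by (rule subsetD[OF keys_mult])
  then obtain \<beta> \<gamma> where \<alpha>: "\<alpha> = \<beta> + \<gamma>" "\<beta> \<in> keys (s a)" "\<gamma> \<in> keys (iota a h A)"
    by blast
  have a: "a \<notin> A"
    using \<alpha>(3) by (auto simp: iota_def split: if_splits)
  then have "\<gamma> \<in> keys (h (insert a A))"
    using \<alpha>(3) by (cases "even (card {c \<in> A. c < a})") (simp_all add: iota_def)
  then have "mdeg \<gamma> + card (insert a A) = d"
    using h unfolding homog_form_def by blast
  then have "mdeg \<gamma> + card A + 1 = d"
    using a by simp
  moreover have "mdeg \<beta> = e"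
    using s \<alpha>(2) by (simp add: homog_poly_def)
  ultimately show "mdeg \<alpha> + card A = d + e - 1"
    using \<alpha>(1) by (simp add: mdeg_add)
qed

section \<open>Invariants of degree zero\<close>

lemma invertible_matrix_inv:
  fixes A :: "'a::field^'n^'n"
  assumes "invertible A"
  shows "A ** matrix_inv A = mat 1 \<and> matrix_inv A ** A = mat 1"
  using assms unfolding invertible_def matrix_inv_def by (rule someI_ex)

lemma matrix_inv_rep_mult:
  assumes grp: "finite_matrix_group G" and rep: "matrix_rep G \<rho>" and g: "g \<in> G"
  shows "matrix_inv (\<rho> g) ** \<rho> g = mat 1"
proof -
  have "invertible g" "matrix_inv g \<in> G"
    using grp g by (auto simp: finite_matrix_group_def)
  then have "\<rho> g ** \<rho> (matrix_inv g) = mat 1" "\<rho> (matrix_inv g) ** \<rho> g = mat 1"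
    using invertible_matrix_inv rep g unfolding matrix_rep_def by metis+
  then have "invertible (\<rho> g)"
    unfolding invertible_def by blast
  then show ?thesis
    using invertible_matrix_inv by blast
qed

lemma matrix_vector_mult_sum:
  "(A::'a::comm_ring_1^'m::finite^'k) *v (\<Sum>g\<in>S. f g) = (\<Sum>g\<in>S. A *v f g)"
  by (induct S rule: infinite_finite_induct) (simp_all add: matrix_vector_right_distrib)

lemma rep_mult_sum_orbit:
  assumes grp: "finite_matrix_group G" and rep: "matrix_rep G \<rho>" and h: "h \<in> G"
  shows "\<rho> h *v (\<Sum>g\<in>G. \<rho> g *v v) = (\<Sum>g\<in>G. \<rho> g *v v)"
proof -
  have "matrix_inv h ** h = mat 1"
    using invertible_matrix_inv grp h by (auto simp: finite_matrix_group_def)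
  then have "inj_on ((**) h) G"
    by (intro inj_onI) (metis matrix_mul_assoc matrix_mul_lid)
  moreover have "(**) h ` G = G"
    using grp h calculation by (intro endo_inj_surj) (auto simp: finite_matrix_group_def)
  ultimately have "(\<Sum>g\<in>G. \<rho> (h ** g) *v v) = (\<Sum>g\<in>G. \<rho> g *v v)"
    by (metis (no_types, lifting) sum.reindex_cong)
  moreover have "\<rho> h *v (\<Sum>g\<in>G. \<rho> g *v v) = (\<Sum>g\<in>G. \<rho> (h ** g) *v v)"
    unfolding matrix_vector_mult_sum using rep h
    by (intro sum.cong refl) (simp add: matrix_vector_mul_assoc matrix_rep_def)
  ultimately show ?thesis
    by simp
qed

text \<open>The averages \<open>\<Sum>\<^sub>g \<rho> g e\<^sub>c\<close> are fixed, hence vanish; pairing them with \<open>u\<close> gives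
  \<open>|G| u\<^sub>c = 0\<close>.\<close>

lemma contragredient_fixed_eq_0:
  fixes G :: "('a::field_char_0, 'n::finite) sqmat set" and \<rho> :: "('a, 'n) sqmat \<Rightarrow> ('a, 'm::finite) sqmat"
  assumes grp: "finite_matrix_group G" and rep: "matrix_rep G \<rho>"
    and fix0: "\<forall>v::('a, 'm) vec. (\<forall>g\<in>G. \<rho> g *v v = v) \<longrightarrow> v = 0"
    and u: "\<forall>g\<in>G. u v* \<rho> g = u"
  shows "u = 0"
proof -
  have "card G \<noteq> 0"
    using grp by (auto simp: finite_matrix_group_def)
  have "u $ c = 0" for c
  proof -
    have average: "(\<Sum>g\<in>G. \<rho> g *v axis c 1) = 0"
      using fix0 rep_mult_sum_orbit[OF grp rep] by blast
    have "of_nat (card G) * u $ c = (\<Sum>g\<in>G. (u v* \<rho> g) $ c)"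
      using u by simp
    also have "\<dots> = (\<Sum>b\<in>UNIV. u $ b * (\<Sum>g\<in>G. \<rho> g *v axis c 1) $ b)"
      by (simp add: vector_matrix_mult_def matrix_vector_mult_def axis_def sum_distrib_left
          mult_ac if_distrib[of "\<lambda>x. _ * x"] cong: if_cong) (rule sum.swap)
    finally show ?thesis
      using average \<open>card G \<noteq> 0\<close> by simp
  qed
  then show ?thesis
    by (simp add: vec_eq_iff)
qed

lemma homog_free_basis_nonzero:
  fixes w :: "'i::finite \<Rightarrow> 'm::finite \<Rightarrow> ('a::field, 'n::finite) mpoly" and G :: "('a^'n^'n) set"
  assumes "homog_free_basis G Inv w"
  shows "w j \<noteq> (\<lambda>a. 0)"
proof
  assume wj: "w j = (\<lambda>a. 0)"
  define P where "P f \<longleftrightarrow> (\<forall>i. f i \<in> SV_inv G) \<and> w j = (\<lambda>a. \<Sum>i\<in>UNIV. f i * w i a)"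
    for f :: "'i \<Rightarrow> ('a, 'n) mpoly"
  have "0 \<in> SV_inv G" "1 \<in> SV_inv G"
    by (simp_all add: SV_inv_def act_SV_def psubst_pconst[of _ 1, unfolded pconst_1])
  then have "P (\<lambda>i. 0)" "P (\<lambda>i. if i = j then 1 else 0)"
    using wj by (simp_all add: P_def if_distrib[of "\<lambda>x. x * _"] cong: if_cong)
  moreover have "\<exists>!f. P f"
    using assms by (simp add: homog_free_basis_def P_def)
  ultimately have "(\<lambda>i::'i. 0) = (\<lambda>i. if i = j then 1 else (0 :: ('a, 'n) mpoly))"
    unfolding Ex1_def by blast
  then show False
    by (metis zero_neq_one)
qed

lemma homog_free_basis_pos_degree:
  fixes w :: "'i::finite \<Rightarrow> 'm::finite \<Rightarrow> ('a::field, 'n::finite) mpoly"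
  assumes basis: "homog_free_basis G Inv w"
    and no_const: "\<And>c. (\<lambda>a. pconst (c a)) \<in> Inv \<Longrightarrow> c = (\<lambda>_. 0)"
  shows "\<exists>d>0. \<forall>a. homog_poly d (w j a)"
proof -
  obtain d where d: "\<forall>a. homog_poly d (w j a)"
    using basis unfolding homog_free_basis_def by blast
  have "d \<noteq> 0"
  proof
    assume "d = 0"
    then have "w j = (\<lambda>a. pconst (lookup (w j a) 0))"
      using d homog_poly_0_eq_pconst by blast
    moreover have "w j \<in> Inv"
      using basis by (simp add: homog_free_basis_def)
    ultimately have "w j = (\<lambda>a. 0)"
      using no_const by (metis pconst_0)
    then show False
      using homog_free_basis_nonzero[OF basis] by blast
  qed
  then show ?thesis
    using d by blast
qed

lemma SVM_inv_pconst:
  fixes G :: "('a::field, 'n::finite) sqmat set" and \<rho> :: "('a, 'n) sqmat \<Rightarrow> ('a, 'm::finite) sqmat"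
  assumes fix0: "\<forall>v::('a, 'm) vec. (\<forall>g\<in>G. \<rho> g *v v = v) \<longrightarrow> v = 0"
    and inv: "(\<lambda>a. pconst (c a)) \<in> SVM_inv G \<rho>"
  shows "c = (\<lambda>_. 0)"
proof -
  have "\<rho> g *v (\<chi> a. c a) = (\<chi> a. c a)" if "g \<in> G" for g
  proof -
    have "pconst (\<Sum>a\<in>UNIV. \<rho> g $ b $ a * c a) = (pconst (c b) :: ('a, 'n) mpoly)" for b
      using inv that by (simp add: SVM_inv_def act_SVM_def act_SV_pconst fun_eq_iff pconst_mult pconst_sum)
    then show ?thesis
      by (simp add: vec_eq_iff matrix_vector_mult_def pconst_inject)
  qed
  then have "(\<chi> a. c a) = 0"
    using fix0 by blast
  then show ?thesis
    by (simp add: vec_eq_iff fun_eq_iff)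
qed

lemma SVMs_inv_pconst:
  fixes G :: "('a::field_char_0, 'n::finite) sqmat set" and \<rho> :: "('a, 'n) sqmat \<Rightarrow> ('a, 'm::finite) sqmat"
  assumes grp: "finite_matrix_group G" and rep: "matrix_rep G \<rho>"
    and fix0: "\<forall>v::('a, 'm) vec. (\<forall>g\<in>G. \<rho> g *v v = v) \<longrightarrow> v = 0"
    and inv: "(\<lambda>a. pconst (c a)) \<in> SVMs_inv G \<rho>"
  shows "c = (\<lambda>_. 0)"
proof -
  have "(\<chi> a. c a) v* \<rho> g = (\<chi> a. c a)" if g: "g \<in> G" for g
  proof -
    let ?R' = "matrix_inv (\<rho> g)"
    have "pconst (\<Sum>a\<in>UNIV. ?R' $ a $ b * c a) = (pconst (c b) :: ('a, 'n) mpoly)" for b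
      using inv g by (simp add: SVMs_inv_def act_SVMs_def act_SV_pconst fun_eq_iff pconst_mult pconst_sum)
    then have fixed: "(\<chi> a. c a) v* ?R' = (\<chi> a. c a)"
      by (simp add: vec_eq_iff vector_matrix_mult_def pconst_inject mult.commute)
    have "(\<chi> a. c a) v* \<rho> g = ((\<chi> a. c a) v* ?R') v* \<rho> g"
      by (simp only: fixed)
    also have "\<dots> = (\<chi> a. c a)"
      by (simp add: vector_matrix_mul_assoc matrix_inv_rep_mult[OF grp rep g])
    finally show ?thesis .
  qed
  then have "(\<chi> a. c a) = 0"
    using contragredient_fixed_eq_0[OF grp rep fix0] by blast
  then show ?thesis
    by (simp add: vec_eq_iff fun_eq_iff)
qed

section \<open>The anticommutator and the harmonics\<close>

text \<open>On forms of exterior degree 0 the term \<open>d* \<delta>*\<close> vanishes and \<open>\<delta>* d*\<close> acts as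
  \<open>\<Sum>\<^sub>b \<partial>\<^bsub>t\<^sub>b\<^esub> \<partial>\<^bsub>s\<^sub>b\<^esub>\<close>.\<close>

lemma anticommutator_on_degree_zero:
  fixes s t :: "'m::{finite,linorder} \<Rightarrow> ('a::comm_ring_1, 'n::{finite,linorder}) mpoly"
  assumes "\<forall>\<omega> B. dstar s (deltastar t \<omega>) B + deltastar t (dstar s \<omega>) B = Dform L \<omega> B"
  shows "dop L P = (\<Sum>b\<in>UNIV. dop (t b) (dop (s b) P))"
proof -
  define \<omega> :: "'m set \<Rightarrow> ('a, 'n) mpoly" where "\<omega> = (\<lambda>A. if A = {} then P else 0)"
  have "deltastar t \<omega> = (\<lambda>B. 0)"
    by (simp add: fun_eq_iff deltastar_def iota_def Dform_def \<omega>_def cong: if_cong)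
  moreover have "dstar s (\<lambda>B. 0) = (\<lambda>B. (0 :: ('a, 'n) mpoly))"
    by (simp add: fun_eq_iff dstar_def eps_def Dform_def cong: if_cong)
  moreover have "dstar s \<omega> {b} = dop (s b) P" for b
  proof -
    have "dstar s \<omega> {b} = (\<Sum>a\<in>UNIV. if a = b then dop (s b) P else 0)"
      unfolding dstar_def by (intro sum.cong refl) (auto simp: eps_eq Dform_def \<omega>_def)
    then show ?thesis
      by simp
  qed
  then have "deltastar t (dstar s \<omega>) {} = (\<Sum>b\<in>UNIV. dop (t b) (dop (s b) P))"
    unfolding deltastar_def by (simp add: iota_def Dform_def)
  ultimately show ?thesis
    using assms by (metis Dform_def \<omega>_def add_0)
qed

lemma anticommutator_symbol:
  fixes s t :: "'m::{finite,linorder} \<Rightarrow> ('a::{idom,ring_char_0}, 'n::{finite,linorder}) mpoly"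
  assumes "\<forall>\<omega> B. dstar s (deltastar t \<omega>) B + deltastar t (dstar s \<omega>) B = Dform L \<omega> B"
  shows "L = (\<Sum>b\<in>UNIV. t b * s b)"
  by (rule dop_inject) (simp add: anticommutator_on_degree_zero[OF assms] dop_sum_symbol dop_mult)

lemma dstar_harmonics:
  fixes G :: "('a::field, 'n::{finite,linorder}) sqmat set"
    and \<rho> :: "('a, 'n) sqmat \<Rightarrow> ('a, 'm::{finite,linorder}) sqmat"
  assumes grp: "finite_matrix_group G" and rep: "matrix_rep G \<rho>"
    and s: "s \<in> SVMs_inv G \<rho>" "\<forall>a. homog_poly e (s a)" "e > 0"
    and \<omega>: "\<omega> \<in> harmonics G \<rho>"
  shows "dstar s \<omega> \<in> harmonics G \<rho>"
proof -
  have "dstar_adjoint s \<xi> \<in> JM G \<rho>" if "\<xi> \<in> JM G \<rho>" for \<xi>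
  proof (rule dstar_adjoint_JM[OF that])
    fix h assume h: "\<forall>g\<in>G. act_SVLM g \<rho> h = h"
    show "\<forall>g\<in>G. act_SVLM g \<rho> (dstar_adjoint s h) = dstar_adjoint s h"
    proof
      fix g assume g: "g \<in> G"
      show "act_SVLM g \<rho> (dstar_adjoint s h) = dstar_adjoint s h"
        using h g s(1) by (intro act_SVLM_dstar_adjoint matrix_inv_rep_mult[OF grp rep g])
          (auto simp: SVMs_inv_def)
    qed
  next
    fix h :: "'m set \<Rightarrow> ('a, 'n) mpoly" and d assume "homog_form d h" "d > 0"
    then have "homog_form (d + e - 1) (dstar_adjoint s h)"
      using homog_form_dstar_adjoint s(2) by blast
    moreover have "d + e - 1 > 0"
      using \<open>d > 0\<close> s(3) by simp
    ultimately show "\<exists>d'>0. homog_form d' (dstar_adjoint s h)"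
      by blast
  qed
  then show ?thesis
    using \<omega> by (simp add: harmonics_def pairing_dstar)
qed

theorem corollary5p6:
  fixes G :: "('a::field_char_0, 'n::{finite,linorder}) sqmat set"
    and \<rho> :: "('a, 'n) sqmat \<Rightarrow> ('a, 'm::{finite,linorder}) sqmat"
    and wMs :: "'m \<Rightarrow> 'm \<Rightarrow> ('a, 'n) mpoly"
    and wM :: "'m \<Rightarrow> 'm \<Rightarrow> ('a, 'n) mpoly"
    and L :: "'m \<Rightarrow> 'm \<Rightarrow> ('a, 'n) mpoly"
  assumes "finite_matrix_group G"
    and "G = gen_group {g\<in>G. pseudo_reflection g}"
    and "matrix_rep G \<rho>"
    and "\<forall>v::('a, 'm) vec. (\<forall>g\<in>G. \<rho> g *v v = v) \<longrightarrow> v = 0"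
    and "homog_free_basis G (SVMs_inv G \<rho>) wMs"
    and "homog_free_basis G (SVM_inv G \<rho>) wM"
    and "\<forall>i j. L i j \<in> SV_inv G"
    and "\<forall>i j \<omega> B. dstar (wMs i) (deltastar (wM j) \<omega>) B + deltastar (wM j) (dstar (wMs i) \<omega>) B
                   = Dform (L i j) \<omega> B"
  shows "(\<forall>i j. \<exists>d>0. homog_poly d (L i j))
       \<and> (\<forall>i. \<forall>\<omega>\<in>harmonics G \<rho>. dstar (wMs i) \<omega> \<in> harmonics G \<rho>)"
proof (intro conjI allI ballI)
  fix i
  obtain e where e: "e > 0" "\<forall>a. homog_poly e (wMs i a)"
    using homog_free_basis_pos_degree[OF assms(5) SVMs_inv_pconst[OF assms(1,3,4)]] by blast
  fix j
  obtain d where d: "d > 0" "\<forall>a. homog_poly d (wM j a)"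
    using homog_free_basis_pos_degree[OF assms(6) SVM_inv_pconst[OF assms(4)]] by blast
  have "L i j = (\<Sum>b\<in>UNIV. wM j b * wMs i b)"
    using assms(8) by (intro anticommutator_symbol) blast
  then have "homog_poly (d + e) (L i j)"
    using d(2) e(2) by (simp add: homog_poly_sum homog_poly_mult)
  then show "\<exists>d>0. homog_poly d (L i j)"
    using d(1) by (intro exI[of _ "d + e"]) simp
next
  fix i \<omega> assume "\<omega> \<in> harmonics G \<rho>"
  moreover obtain e where "e > 0" "\<forall>a. homog_poly e (wMs i a)"
    using homog_free_basis_pos_degree[OF assms(5) SVMs_inv_pconst[OF assms(1,3,4)]] by blast
  moreover have "wMs i \<in> SVMs_inv G \<rho>"
    using assms(5) by (simp add: homog_free_basis_def)
  ultimately show "dstar (wMs i) \<omega> \<in> harmonics G \<rho>"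
    using dstar_harmonics[OF assms(1,3)] by blast
qed

end
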